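(* Assume the standing setting below, including Assumption S1. Let $x_0\in X$ be a random point independent of the i.i.d. sequence $\omega_1,\omega_2,\dots$ with $\mathbb{E}\{\|x_0-x_*\|^2\}\le R^2$. Run the Stochastic Mirror Descent recursion $x_i=\mathrm{Prox}_{\beta}(\nabla G(x_{i-1},\omega_i),x_{i-1};x_0)$, $i=1,\dots,m$, with constant stepsize parameter $\beta\ge 2\varkappa\nu$. Then $\widehat x_m=\frac1m\sum_{i=1}^m x_i$ satisfies $$\mathbb{E}\{g(\widehat x_m)\}-g_*\le \frac{2R^2}{m}\Big(\Theta\beta+\frac{\varkappa\nu^2}{2\beta}\Big)+\frac{2\varkappa'\varsigma_*^2}{\beta}.$$
   Context: Standing setting. $E$ is a finite-dimensional real Euclidean space with inner product $\langle\cdot,\cdot\rangle$ and $\|z\|_2=\langle z,z\rangle^{1/2}$; $\|\cdot\|$ is a norm on $E$ with conjugate norm $\|s\|_*=\max\{\langle s,x\rangle:\|x\|\le1\}$. $X\subset E$ is convex and closed with nonempty interior. $\omega$ is a random variable with distribution $P$ on $\Omega$, $G:X\times\Omega\to\mathbb{R}$, and $g(x)=\mathbb{E}\{G(x,\omega)\}$ is finite, convex and differentiable on $X$ with $\|\nabla g(x)-\nabla g(x')\|_*\le \mathcal{L}\|x-x'\|$ for all $x,x'\in X$. The problem $\min_{x\in X}g(x)$ has a unique minimizer $x_*$, $g_*=g(x_* )$. $\omega_1,\omega_2,\dots$ are i.i.d. copies of $\omega$. Assumption S1: $G(\cdot,\omega)$ is differentiable on $X$ for a.e. $\omega$; $\mathbb{E}\{\nabla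 G(x,\omega)\}=\nabla g(x)$; with $\zeta(x,\omega)=\nabla G(x,\omega)-\nabla g(x)$ and $\varsigma^2(x)=\mathbb{E}\{\|\zeta(x,\omega)\|_*^2\}$, there are constants $1\le\varkappa,\varkappa'<\infty$ and $\mathcal{L}\le\nu<\infty$ such that for all $x\in X$: $\varsigma^2(x)\le\varkappa\nu[g(x)-g_*-\langle\nabla g(x_* ),x-x_*\rangle]+\varkappa'\varsigma_*^2$, where $\varsigma_*^2=\mathbb{E}\{\|\zeta(x_*,\omega)\|_*^2\}$. Distance-generating function: $\vartheta:E\to\mathbb{R}$ is continuously differentiable, convex, with $\langle\nabla\vartheta(x)-\nabla\vartheta(x'),x-x'\rangle\ge\|x-x'\|^2$ for all $x,x'$, $\vartheta(x)\ge\vartheta(0)=0$, and $\vartheta(x)\le\Theta\|x\|^2$ for all $x$ (so $\Theta\ge 1/2$). Bregman divergence: $V_{x_0}(x,z)=\vartheta(z-x_0)-\vartheta(x-x_0)-\langle\nabla\vartheta(x-x_0),z-x\rangle$. Proximal mapping: for $u\in E$, $x,x_0\in X$, $\beta>0$, $\mathrm{Prox}_\beta(u,x;x_0)=\arg\min_{z\in X}\{\langle u,z\rangle+\beta V_{x_0}(x,z)\}$. *)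

theory Defs
  imports "HOL-Probability.Probability"
begin

definition is_norm :: "('e::euclidean_space \<Rightarrow> real) \<Rightarrow> bool" where
  "is_norm nrm \<longleftrightarrow>
     (\<forall>x. nrm x = 0 \<longleftrightarrow> x = 0) \<and>
     (\<forall>x y. nrm (x + y) \<le> nrm x + nrm y) \<and>
     (\<forall>c x. nrm (c *\<^sub>R x) = \<bar>c\<bar> * nrm x)"

definition dual_norm :: "('e::euclidean_space \<Rightarrow> real) \<Rightarrow> 'e \<Rightarrow> real" where
  "dual_norm nrm s = Sup ((\<lambda>x. s \<bullet> x) ` {x. nrm x \<le> 1})"

text \<open>Bregman divergence V_{x0}(x,z) of the d.-g.f. th with gradient gth.\<close>
definition bregman :: "('e::euclidean_space \<Rightarrow> real) \<Rightarrow> ('e \<Rightarrow> 'e) \<Rightarrow> 'e \<Rightarrow> 'e \<Rightarrow> 'e \<Rightarrow> real" where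
  "bregman th gth x0 x z = th (z - x0) - th (x - x0) - gth (x - x0) \<bullet> (z - x)"

definition prox :: "('e::euclidean_space \<Rightarrow> real) \<Rightarrow> ('e \<Rightarrow> 'e) \<Rightarrow> 'e set \<Rightarrow> real \<Rightarrow> 'e \<Rightarrow> 'e \<Rightarrow> 'e \<Rightarrow> 'e" where
  "prox th gth X \<beta> u x x0 =
     (SOME z. z \<in> X \<and> (\<forall>y\<in>X. u \<bullet> z + \<beta> * bregman th gth x0 x z \<le> u \<bullet> y + \<beta> * bregman th gth x0 x y))"

text \<open>Stochastic Mirror Descent iterates; w i plays the role of omega_{i+1}.\<close>
primrec smd_iter :: "('e::euclidean_space \<Rightarrow> real) \<Rightarrow> ('e \<Rightarrow> 'e) \<Rightarrow> 'e set \<Rightarrow> real \<Rightarrow>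
    ('e \<Rightarrow> 'w \<Rightarrow> 'e) \<Rightarrow> (nat \<Rightarrow> 'w) \<Rightarrow> 'e \<Rightarrow> nat \<Rightarrow> 'e" where
  "smd_iter th gth X \<beta> dG w x0 0 = x0"
| "smd_iter th gth X \<beta> dG w x0 (Suc i) =
     prox th gth X \<beta> (dG (smd_iter th gth X \<beta> dG w x0 i) (w i)) (smd_iter th gth X \<beta> dG w x0 i) x0"

definition sigma2 :: "('e::euclidean_space \<Rightarrow> real) \<Rightarrow> 'w measure \<Rightarrow> ('e \<Rightarrow> 'w \<Rightarrow> 'e) \<Rightarrow> ('e \<Rightarrow> 'e) \<Rightarrow> 'e \<Rightarrow> ennreal" where
  "sigma2 nrm P dG gradg x = (\<integral>\<^sup>+ \<omega>. ennreal ((dual_norm nrm (dG x \<omega> - gradg x))\<^sup>2) \<partial>P)"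

text \<open>Independence of two random variables with possibly different value types:
  independence of the generated sigma-algebras.\<close>
definition indep_rvs :: "'s measure \<Rightarrow> 'a measure \<Rightarrow> ('s \<Rightarrow> 'a) \<Rightarrow> 'b measure \<Rightarrow> ('s \<Rightarrow> 'b) \<Rightarrow> bool" where
  "indep_rvs M N1 X N2 Y \<longleftrightarrow>
     prob_space.indep_set M (sets (vimage_algebra (space M) X N1)) (sets (vimage_algebra (space M) Y N2))"

end

theory Submission
  imports Defs
begin

text \<open>
  One step \<open>x \<mapsto> z\<close> of mirror descent with a stochastic gradient \<open>gradg x + \<zeta>\<close> satisfies
  \<open>g z - g xs + \<beta> V(z, xs) \<le> \<beta> V(x, xs) - \<zeta> \<bullet> (x - xs) + \<parallel>\<zeta>\<parallel>\<^sub>*\<^sup>2 / \<beta>\<close>, by the three-point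
  inequality of the prox mapping, the descent lemma and convexity of \<open>g\<close>, and Young's inequality
  (using \<open>\<beta> \<ge> 2 L\<close>). The iterate \<open>x\<^sub>k\<close> is a measurable function of \<open>x0\<close> and the samples
  before step \<open>k\<close>, hence independent of the next sample: the cross term has mean zero, and
  Assumption S1 bounds the mean of \<open>\<parallel>\<zeta>\<parallel>\<^sub>*\<^sup>2\<close> by \<open>\<kappa> \<nu>\<close> times the expected linearisation gap
  \<open>g x - g xs - gradg xs \<bullet> (x - xs) \<le> g x - g xs\<close> plus \<open>\<kappa>' \<sigma>\<^sub>*\<^sup>2\<close>. As \<open>\<beta> \<ge> 2 \<kappa> \<nu>\<close>, these gaps
  absorb at most half of the sum of the expected optimality gaps, and summing the telescoping
  inequalities with \<open>V(x0, xs) \<le> \<Theta> \<parallel>x0 - xs\<parallel>\<^sup>2\<close> and the initial linearisation gap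
  \<open>\<le> \<nu>/2 \<parallel>x0 - xs\<parallel>\<^sup>2\<close> gives the bound for the average of the iterates, by Jensen's inequality.
\<close>

section \<open>Norms and dual norms\<close>

lemma is_norm_zero: "is_norm nrm \<Longrightarrow> nrm 0 = 0"
  unfolding is_norm_def by auto

lemma is_norm_eq_0_iff: "is_norm nrm \<Longrightarrow> nrm x = 0 \<longleftrightarrow> x = 0"
  unfolding is_norm_def by auto

lemma is_norm_scaleR: "is_norm nrm \<Longrightarrow> nrm (c *\<^sub>R x) = \<bar>c\<bar> * nrm x"
  unfolding is_norm_def by auto

lemma is_norm_triangle: "is_norm nrm \<Longrightarrow> nrm (x + y) \<le> nrm x + nrm y"
  unfolding is_norm_def by auto

lemma is_norm_minus: "is_norm nrm \<Longrightarrow> nrm (- x) = nrm x"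
  using is_norm_scaleR[of nrm "-1" x] by simp

lemma is_norm_minus_commute: "is_norm nrm \<Longrightarrow> nrm (x - y) = nrm (y - x)"
  using is_norm_minus[of nrm "x - y"] by simp

lemma is_norm_nonneg:
  assumes "is_norm nrm"
  shows "nrm x \<ge> 0"
proof -
  have "nrm (x + - x) \<le> nrm x + nrm (- x)" by (rule is_norm_triangle[OF assms])
  then show ?thesis using is_norm_zero[OF assms] is_norm_minus[OF assms, of x] by simp
qed

lemma is_norm_pos: "is_norm nrm \<Longrightarrow> x \<noteq> 0 \<Longrightarrow> nrm x > 0"
  using is_norm_nonneg is_norm_eq_0_iff by (metis less_eq_real_def)

lemma is_norm_sum_le:
  assumes "is_norm nrm"
  shows "nrm (\<Sum>i\<in>S. f i) \<le> (\<Sum>i\<in>S. nrm (f i))"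
proof (induction S rule: infinite_finite_induct)
  case (insert a F)
  then show ?case using is_norm_triangle[OF assms, of "f a" "sum f F"] by simp
qed (simp_all add: is_norm_zero[OF assms])

lemma is_norm_le_norm:
  assumes "is_norm nrm"
  shows "nrm x \<le> (\<Sum>b\<in>Basis. nrm b) * norm x"
proof -
  have "nrm x = nrm (\<Sum>b\<in>Basis. (x \<bullet> b) *\<^sub>R b)" by (simp add: euclidean_representation)
  also have "\<dots> \<le> (\<Sum>b\<in>Basis. nrm ((x \<bullet> b) *\<^sub>R b))" by (rule is_norm_sum_le[OF assms])
  also have "\<dots> = (\<Sum>b\<in>Basis. \<bar>x \<bullet> b\<bar> * nrm b)" by (simp add: is_norm_scaleR[OF assms])
  also have "\<dots> \<le> (\<Sum>b\<in>Basis. norm x * nrm b)"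
    by (intro sum_mono mult_right_mono) (auto simp: Basis_le_norm is_norm_nonneg[OF assms])
  finally show ?thesis by (simp add: sum_distrib_left mult.commute)
qed

lemma is_norm_continuous:
  assumes "is_norm nrm"
  shows "continuous_on UNIV nrm"
proof -
  define C where "C = (\<Sum>b\<in>Basis. nrm b)"
  have "C \<ge> 0" unfolding C_def by (simp add: sum_nonneg is_norm_nonneg[OF assms])
  moreover have "\<bar>nrm x - nrm y\<bar> \<le> C * norm (x - y)" for x y
  proof -
    have "nrm x \<le> nrm y + nrm (x - y)" "nrm y \<le> nrm x + nrm (y - x)"
      using is_norm_triangle[OF assms, of y "x - y"] is_norm_triangle[OF assms, of x "y - x"] by simp_all
    moreover have "nrm (x - y) \<le> C * norm (x - y)" "nrm (y - x) \<le> C * norm (x - y)"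
      using is_norm_le_norm[OF assms, of "x - y"] is_norm_le_norm[OF assms, of "y - x"]
      unfolding C_def by (auto simp: norm_minus_commute)
    ultimately show ?thesis by (simp add: abs_le_iff)
  qed
  ultimately have "C-lipschitz_on UNIV nrm"
    by (intro lipschitz_onI) (auto simp: dist_real_def dist_norm)
  then show ?thesis by (rule lipschitz_on_continuous_on)
qed

text \<open>The constant is the minimum of \<open>nrm\<close> on the compact Euclidean unit sphere.\<close>

lemma is_norm_ge_norm:
  assumes "is_norm nrm"
  obtains c where "c > 0" "\<And>x. c * norm x \<le> nrm x"
proof -
  have "sphere (0::'a) 1 \<noteq> {}" by simp
  then obtain z where z: "z \<in> sphere (0::'a) 1" and zmin: "\<forall>y\<in>sphere 0 1. nrm z \<le> nrm y"
    using continuous_attains_inf[OF compact_sphere _ continuous_on_subset[OF is_norm_continuous[OF assms]]]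
    by blast
  have "nrm z > 0" using z by (intro is_norm_pos[OF assms]) auto
  moreover have "nrm z * norm x \<le> nrm x" for x
  proof (cases "x = 0")
    case False
    then have "nrm z \<le> nrm ((1 / norm x) *\<^sub>R x)" using zmin by simp
    also have "\<dots> = nrm x / norm x" using is_norm_scaleR[OF assms] by simp
    finally show ?thesis using False by (simp add: field_simps)
  qed (simp add: is_norm_zero[OF assms])
  ultimately show ?thesis using that by blast
qed

lemma is_norm_unit_ball_inner_le:
  assumes "is_norm nrm"
  obtains C where "C \<ge> 0" "\<And>s x. nrm x \<le> 1 \<Longrightarrow> s \<bullet> x \<le> C * norm s"
proof -
  obtain c where c: "c > 0" "\<And>x. c * norm x \<le> nrm x" using is_norm_ge_norm[OF assms] by blast
  have "s \<bullet> x \<le> (1 / c) * norm s" if "nrm x \<le> 1" for s x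
  proof -
    have "c * norm x \<le> 1" using c(2)[of x] that by linarith
    then have "norm s * norm x \<le> norm s * (1 / c)"
      using c(1) by (intro mult_left_mono) (simp_all add: field_simps)
    moreover have "s \<bullet> x \<le> norm s * norm x" by (metis Cauchy_Schwarz_ineq2 abs_le_D1)
    ultimately show ?thesis by simp
  qed
  then show ?thesis using that[of "1 / c"] c(1) by simp
qed

lemma dual_norm_bdd_above: "is_norm nrm \<Longrightarrow> bdd_above ((\<lambda>x. s \<bullet> x) ` {x. nrm x \<le> 1})"
  by (rule is_norm_unit_ball_inner_le) (auto intro!: bdd_aboveI2)

lemma inner_le_dual_norm: "is_norm nrm \<Longrightarrow> nrm x \<le> 1 \<Longrightarrow> s \<bullet> x \<le> dual_norm nrm s"
  unfolding dual_norm_def by (rule cSUP_upper[OF _ dual_norm_bdd_above]) auto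

lemma inner_le_dual_norm_mult:
  assumes "is_norm nrm"
  shows "s \<bullet> x \<le> dual_norm nrm s * nrm x"
proof (cases "x = 0")
  case False
  then have p: "nrm x > 0" by (rule is_norm_pos[OF assms])
  have "s \<bullet> ((1 / nrm x) *\<^sub>R x) \<le> dual_norm nrm s"
    using p by (intro inner_le_dual_norm[OF assms]) (simp add: is_norm_scaleR[OF assms])
  then show ?thesis using p by (simp add: field_simps)
qed (simp add: is_norm_zero[OF assms])

lemma dual_norm_nonneg: "is_norm nrm \<Longrightarrow> dual_norm nrm s \<ge> 0"
  using inner_le_dual_norm[of nrm 0 s] is_norm_zero[of nrm] by simp

lemma dual_norm_le:
  assumes "is_norm nrm" "\<And>x. nrm x \<le> 1 \<Longrightarrow> s \<bullet> x \<le> B"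
  shows "dual_norm nrm s \<le> B"
  unfolding dual_norm_def
  by (rule cSUP_least) (use assms is_norm_zero[OF assms(1)] in \<open>auto intro: exI[of _ 0]\<close>)

lemma dual_norm_le_norm:
  assumes "is_norm nrm"
  obtains C where "C \<ge> 0" "\<And>s. dual_norm nrm s \<le> C * norm s"
  by (rule is_norm_unit_ball_inner_le[OF assms]) (use dual_norm_le[OF assms] in blast)

lemma dual_norm_triangle:
  assumes "is_norm nrm"
  shows "dual_norm nrm (s + t) \<le> dual_norm nrm s + dual_norm nrm t"
  by (rule dual_norm_le[OF assms]) (use inner_le_dual_norm[OF assms] in \<open>auto simp: inner_add_left add_mono\<close>)

lemma dual_norm_continuous:
  assumes "is_norm nrm"
  shows "continuous_on UNIV (dual_norm nrm)"
proof -
  obtain C where C: "C \<ge> 0" "\<And>s. dual_norm nrm s \<le> C * norm s"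
    using dual_norm_le_norm[OF assms] by blast
  have "\<bar>dual_norm nrm x - dual_norm nrm y\<bar> \<le> C * norm (x - y)" for x y
    using dual_norm_triangle[OF assms, of y "x - y"] dual_norm_triangle[OF assms, of x "y - x"]
      C(2)[of "x - y"] C(2)[of "y - x"] by (simp add: abs_le_iff norm_minus_commute)
  then have "C-lipschitz_on UNIV (dual_norm nrm)"
    using C(1) by (intro lipschitz_onI) (auto simp: dist_real_def dist_norm)
  then show ?thesis by (rule lipschitz_on_continuous_on)
qed

lemma mult_le_weighted_squares:
  fixes a b c :: real
  assumes "c > 0"
  shows "a * b \<le> a\<^sup>2 / (2 * c) + c * b\<^sup>2 / 2"
proof -
  have "0 \<le> (a - c * b)\<^sup>2" by simp
  then have "2 * c * (a * b) \<le> a\<^sup>2 + c\<^sup>2 * b\<^sup>2" by (simp add: power2_eq_square algebra_simps)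
  then show ?thesis using assms by (simp add: field_simps power2_eq_square)
qed

section \<open>Differentiable functions along segments\<close>

lemma convex_segment_point_mem:
  assumes "convex X" "x \<in> X" "y \<in> X" "t \<in> {0..1}"
  shows "x + t *\<^sub>R (y - x) \<in> X"
proof -
  have "x + t *\<^sub>R (y - x) = (1 - t) *\<^sub>R x + t *\<^sub>R y" by (simp add: algebra_simps)
  then show ?thesis using assms unfolding convex_def by auto
qed

lemma has_real_derivative_along_segment:
  fixes f :: "'a::euclidean_space \<Rightarrow> real"
  assumes cvx: "convex X" and x: "x \<in> X" and y: "y \<in> X"
    and diff: "\<forall>z\<in>X. (f has_derivative (\<lambda>h. f' z \<bullet> h)) (at z within X)"
    and t: "t \<in> {0..1}"
  shows "((\<lambda>t. f (x + t *\<^sub>R (y - x))) has_real_derivative (f' (x + t *\<^sub>R (y - x)) \<bullet> (y - x)))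
           (at t within {0..1})"
proof -
  have img: "(\<lambda>t. x + t *\<^sub>R (y - x)) ` {0..1} \<subseteq> X"
    using convex_segment_point_mem[OF cvx x y] by blast
  then have zX: "x + t *\<^sub>R (y - x) \<in> X" using t by blast
  have d1: "((\<lambda>t. x + t *\<^sub>R (y - x)) has_derivative (\<lambda>h. h *\<^sub>R (y - x))) (at t within {0..1})"
    by (auto intro!: derivative_eq_intros)
  have d2: "(f has_derivative (\<lambda>h. f' (x + t *\<^sub>R (y - x)) \<bullet> h))
       (at (x + t *\<^sub>R (y - x)) within (\<lambda>t. x + t *\<^sub>R (y - x)) ` {0..1})"
    using has_derivative_subset[OF diff[rule_format, OF zX] img] .
  have "((\<lambda>t. f (x + t *\<^sub>R (y - x))) has_derivative
      (\<lambda>h. f' (x + t *\<^sub>R (y - x)) \<bullet> (h *\<^sub>R (y - x)))) (at t within {0..1})"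
    by (rule has_derivative_in_compose[OF d1 d2])
  moreover have "(\<lambda>h. f' (x + t *\<^sub>R (y - x)) \<bullet> (h *\<^sub>R (y - x))) = (*) (f' (x + t *\<^sub>R (y - x)) \<bullet> (y - x))"
    by (auto simp: mult.commute)
  ultimately show ?thesis unfolding has_field_derivative_def by simp
qed

lemma DERIV_nonpos_imp_le_unit_interval:
  fixes \<phi> \<phi>' :: "real \<Rightarrow> real"
  assumes "\<And>t. t \<in> {0..1} \<Longrightarrow> (\<phi> has_real_derivative \<phi>' t) (at t within {0..1})"
    and "\<And>t. t \<in> {0<..<1} \<Longrightarrow> \<phi>' t \<le> 0"
  shows "\<phi> 1 \<le> \<phi> 0"
proof -
  have cont: "continuous_on {0..1} \<phi>"
    using assms(1) by (intro has_derivative_continuous_on) (auto simp: has_field_derivative_def)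
  have "\<exists>l z. 0 < z \<and> z < 1 \<and> DERIV \<phi> z :> l \<and> \<phi> 1 - \<phi> 0 = (1 - 0) * l"
  proof (rule MVT[OF _ cont])
    fix t :: real assume "0 < t" "t < 1"
    then have "(\<phi> has_real_derivative \<phi>' t) (at t)"
      using assms(1)[of t] at_within_Icc_at[of 0 t 1] by auto
    then show "\<phi> differentiable (at t)" by (auto simp: real_differentiable_def)
  qed simp
  then obtain l z where lz: "0 < z" "z < 1" "DERIV \<phi> z :> l" "\<phi> 1 - \<phi> 0 = l" by auto
  have "DERIV \<phi> z :> \<phi>' z" using assms(1)[of z] at_within_Icc_at[of 0 z 1] lz by auto
  then have "l = \<phi>' z" using lz DERIV_unique by blast
  then show ?thesis using lz assms(2)[of z] by auto
qed

lemma right_derivative_at_0_bounds: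
  fixes \<phi> :: "real \<Rightarrow> real"
  assumes d: "(\<phi> has_real_derivative d) (at 0 within {0..1})"
  shows "(\<And>t. t \<in> {0<..<1} \<Longrightarrow> (\<phi> t - \<phi> 0) / t \<le> B) \<Longrightarrow> d \<le> B"
    and "(\<And>t. t \<in> {0<..<1} \<Longrightarrow> (\<phi> t - \<phi> 0) / t \<ge> B) \<Longrightarrow> d \<ge> B"
proof -
  have F: "at (0::real) within {0..1} = at_right 0" by (rule at_within_Icc_at_right) simp
  have lim: "((\<lambda>y. (\<phi> y - \<phi> 0) / y) \<longlongrightarrow> d) (at_right 0)"
    using d unfolding has_field_derivative_iff F by simp
  have ev: "eventually (\<lambda>x. x \<in> {0<..<1}) (at_right (0::real))" by (rule eventually_at_right_real) simp
  show "(\<And>t. t \<in> {0<..<1} \<Longrightarrow> (\<phi> t - \<phi> 0) / t \<le> B) \<Longrightarrow> d \<le> B"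
    by (rule tendsto_upperbound[OF lim]) (use ev in \<open>auto elim: eventually_mono\<close>)
  show "(\<And>t. t \<in> {0<..<1} \<Longrightarrow> (\<phi> t - \<phi> 0) / t \<ge> B) \<Longrightarrow> d \<ge> B"
    by (rule tendsto_lowerbound[OF lim]) (use ev in \<open>auto elim: eventually_mono\<close>)
qed

lemma lipschitz_gradient_upper_bound:
  fixes f :: "'a::euclidean_space \<Rightarrow> real"
  assumes nrm: "is_norm nrm" and cvx: "convex X" and x: "x \<in> X" and y: "y \<in> X"
    and diff: "\<forall>z\<in>X. (f has_derivative (\<lambda>h. f' z \<bullet> h)) (at z within X)"
    and lip: "\<forall>a\<in>X. \<forall>b\<in>X. dual_norm nrm (f' a - f' b) \<le> L * nrm (a - b)"
  shows "f y \<le> f x + f' x \<bullet> (y - x) + L / 2 * (nrm (y - x))\<^sup>2"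
proof -
  define h where "h = y - x"
  define \<phi> where "\<phi> t = f (x + t *\<^sub>R h) - t * (f' x \<bullet> h) - L / 2 * t\<^sup>2 * (nrm h)\<^sup>2" for t
  define \<phi>' where "\<phi>' t = f' (x + t *\<^sub>R h) \<bullet> h - f' x \<bullet> h - L * t * (nrm h)\<^sup>2" for t
  have "(\<phi> has_real_derivative \<phi>' t) (at t within {0..1})" if t: "t \<in> {0..1}" for t
    unfolding \<phi>_def \<phi>'_def h_def
    by (rule derivative_eq_intros has_real_derivative_along_segment[OF cvx x y diff t] refl)+
      (simp add: power2_eq_square)
  moreover have "\<phi>' t \<le> 0" if t: "t \<in> {0<..<1}" for t
  proof -
    have zX: "x + t *\<^sub>R h \<in> X" unfolding h_def using t by (intro convex_segment_point_mem[OF cvx x y]) auto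
    have "f' (x + t *\<^sub>R h) \<bullet> h - f' x \<bullet> h = (f' (x + t *\<^sub>R h) - f' x) \<bullet> h" by (simp add: inner_diff_left)
    also have "\<dots> \<le> dual_norm nrm (f' (x + t *\<^sub>R h) - f' x) * nrm h" by (rule inner_le_dual_norm_mult[OF nrm])
    also have "\<dots> \<le> (L * nrm (t *\<^sub>R h)) * nrm h"
      using lip zX x by (intro mult_right_mono is_norm_nonneg[OF nrm]) (metis add_diff_cancel_left')
    also have "\<dots> = L * t * (nrm h)\<^sup>2" using t is_norm_scaleR[OF nrm] by (simp add: power2_eq_square)
    finally show ?thesis unfolding \<phi>'_def by simp
  qed
  ultimately have "\<phi> 1 \<le> \<phi> 0" by (rule DERIV_nonpos_imp_le_unit_interval)
  then show ?thesis unfolding \<phi>_def h_def by simp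
qed

lemma strongly_monotone_gradient_lower_bound:
  fixes th :: "'a::euclidean_space \<Rightarrow> real"
  assumes nrm: "is_norm nrm"
    and th_deriv: "\<forall>x. (th has_derivative (\<lambda>h. gth x \<bullet> h)) (at x)"
    and th_strong: "\<forall>x x'. (gth x - gth x') \<bullet> (x - x') \<ge> (nrm (x - x'))\<^sup>2"
  shows "th y - th x - gth x \<bullet> (y - x) \<ge> 1/2 * (nrm (y - x))\<^sup>2"
proof -
  define h where "h = y - x"
  have diff: "\<forall>z\<in>UNIV. (th has_derivative (\<lambda>h. gth z \<bullet> h)) (at z within UNIV)" using th_deriv by simp
  define \<phi> where "\<phi> t = - th (x + t *\<^sub>R h) + t * (gth x \<bullet> h) + 1 / 2 * t\<^sup>2 * (nrm h)\<^sup>2" for t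
  define \<phi>' where "\<phi>' t = - (gth (x + t *\<^sub>R h) \<bullet> h) + gth x \<bullet> h + t * (nrm h)\<^sup>2" for t
  have "(\<phi> has_real_derivative \<phi>' t) (at t within {0..1})" if t: "t \<in> {0..1}" for t
    unfolding \<phi>_def \<phi>'_def h_def
    by (rule derivative_eq_intros has_real_derivative_along_segment[OF convex_UNIV _ _ diff t] refl UNIV_I)+
      (simp add: power2_eq_square)
  moreover have "\<phi>' t \<le> 0" if t: "t \<in> {0<..<1}" for t
  proof -
    have "(nrm (t *\<^sub>R h))\<^sup>2 \<le> (gth (x + t *\<^sub>R h) - gth x) \<bullet> (t *\<^sub>R h)"
      using th_strong[rule_format, of "x + t *\<^sub>R h" x] by simp
    then have "t * (t * (nrm h)\<^sup>2) \<le> t * ((gth (x + t *\<^sub>R h) - gth x) \<bullet> h)"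
      using t is_norm_scaleR[OF nrm] by (simp add: power2_eq_square algebra_simps)
    then have "t * (nrm h)\<^sup>2 \<le> (gth (x + t *\<^sub>R h) - gth x) \<bullet> h" using t by simp
    then show ?thesis unfolding \<phi>'_def by (simp add: inner_diff_left)
  qed
  ultimately have "\<phi> 1 \<le> \<phi> 0" by (rule DERIV_nonpos_imp_le_unit_interval)
  then show ?thesis unfolding \<phi>_def h_def by simp
qed

lemma convex_on_gradient_inequality:
  fixes f :: "'a::euclidean_space \<Rightarrow> real"
  assumes cvx: "convex X" and x: "x \<in> X" and y: "y \<in> X"
    and diff: "\<forall>z\<in>X. (f has_derivative (\<lambda>h. f' z \<bullet> h)) (at z within X)"
    and fc: "convex_on X f"
  shows "f y \<ge> f x + f' x \<bullet> (y - x)"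
proof -
  have d: "((\<lambda>t. f (x + t *\<^sub>R (y - x))) has_real_derivative (f' x \<bullet> (y - x))) (at 0 within {0..1})"
    using has_real_derivative_along_segment[OF cvx x y diff, of 0] by simp
  have "f' x \<bullet> (y - x) \<le> f y - f x"
  proof (rule right_derivative_at_0_bounds(1)[OF d])
    fix t :: real assume t: "t \<in> {0<..<1}"
    have "x + t *\<^sub>R (y - x) = (1 - t) *\<^sub>R x + t *\<^sub>R y" by (simp add: algebra_simps)
    moreover have "f ((1 - t) *\<^sub>R x + t *\<^sub>R y) \<le> (1 - t) * f x + t * f y"
      using fc x y t unfolding convex_on_def by auto
    ultimately have "f (x + t *\<^sub>R (y - x)) - f x \<le> t * (f y - f x)" by (simp add: algebra_simps)
    then show "(f (x + t *\<^sub>R (y - x)) - f (x + 0 *\<^sub>R (y - x))) / t \<le> f y - f x"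
      using t by (simp add: field_simps)
  qed
  then show ?thesis by simp
qed

lemma minimizer_gradient_inner_nonneg:
  fixes f :: "'a::euclidean_space \<Rightarrow> real"
  assumes cvx: "convex X" and x: "xs \<in> X" and y: "y \<in> X"
    and diff: "\<forall>z\<in>X. (f has_derivative (\<lambda>h. f' z \<bullet> h)) (at z within X)"
    and min: "\<forall>z\<in>X. f xs \<le> f z"
  shows "f' xs \<bullet> (y - xs) \<ge> 0"
proof -
  have d: "((\<lambda>t. f (xs + t *\<^sub>R (y - xs))) has_real_derivative (f' xs \<bullet> (y - xs))) (at 0 within {0..1})"
    using has_real_derivative_along_segment[OF cvx x y diff, of 0] by simp
  show ?thesis
  proof (rule right_derivative_at_0_bounds(2)[OF d])
    fix t :: real assume t: "t \<in> {0<..<1}"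
    have "xs + t *\<^sub>R (y - xs) \<in> X" using t by (intro convex_segment_point_mem[OF cvx x y]) auto
    then have "f (xs + t *\<^sub>R (y - xs)) - f xs \<ge> 0" using min by auto
    then show "(f (xs + t *\<^sub>R (y - xs)) - f (xs + 0 *\<^sub>R (y - xs))) / t \<ge> 0" using t by simp
  qed
qed



lemma quadratic_growth_le_imp_le:
  fixes A B K d :: real
  assumes "B > 0" "A \<ge> 0" "d \<ge> 0" "B * d\<^sup>2 - A * d \<le> K"
  shows "d \<le> max 1 ((A + \<bar>K\<bar>) / B)"
proof (rule ccontr)
  assume "\<not> ?thesis"
  then have d1: "d > 1" and d2: "d > (A + \<bar>K\<bar>) / B" by auto
  from d2 assms(1) have "B * d > A + \<bar>K\<bar>" by (simp add: field_simps)
  then have p: "B * d - A > \<bar>K\<bar>" by simp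
  then have "d * (B * d - A) > 1 * (B * d - A)" using d1 by (intro mult_strict_right_mono) auto
  then have "B * d\<^sup>2 - A * d > \<bar>K\<bar>" using p by (simp add: power2_eq_square algebra_simps)
  then show False using assms(4) by simp
qed

locale bregman_prox =
  fixes nrm :: "'e::euclidean_space \<Rightarrow> real" and th :: "'e \<Rightarrow> real" and gth :: "'e \<Rightarrow> 'e"
    and X :: "'e set" and \<beta> :: real
  assumes nrm: "is_norm nrm"
    and th_deriv: "\<forall>x. (th has_derivative (\<lambda>h. gth x \<bullet> h)) (at x)"
    and th_C1: "continuous_on UNIV gth"
    and th_strong: "\<forall>x x'. (gth x - gth x') \<bullet> (x - x') \<ge> (nrm (x - x'))\<^sup>2"
    and th0: "th 0 = 0"
    and Xcvx: "convex X" and Xcl: "closed X" and Xne: "X \<noteq> {}"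
    and beta: "\<beta> > 0"
begin

text \<open>\<open>prox th gth X \<beta> u x x0\<close> minimises \<open>prox_objective (u - \<beta> *\<^sub>R gth (x - x0)) x0\<close>
  over \<open>X\<close>; the minimiser depends continuously on the linear term and the centre, which
  makes the mirror descent iterates measurable.\<close>

definition prox_objective :: "'e \<Rightarrow> 'e \<Rightarrow> 'e \<Rightarrow> real" where
  "prox_objective c a z = c \<bullet> z + \<beta> * th (z - a)"

definition prox_point :: "'e \<Rightarrow> 'e \<Rightarrow> 'e" where
  "prox_point c a = (SOME z. z \<in> X \<and> (\<forall>y\<in>X. prox_objective c a z \<le> prox_objective c a y))"

lemma dgf_continuous: "continuous_on UNIV th"
  by (rule has_derivative_continuous_on) (use th_deriv in auto)

lemma prox_objective_continuous: "continuous_on UNIV (prox_objective c a)"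
  unfolding prox_objective_def
  by (intro continuous_intros continuous_on_compose2[OF dgf_continuous]) auto

lemma prox_objective_has_derivative:
  "(prox_objective c a has_derivative (\<lambda>h. (c + \<beta> *\<^sub>R gth (z - a)) \<bullet> h)) (at z)"
proof -
  have d1: "((\<lambda>z. z - a) has_derivative (\<lambda>h. h)) (at z)" by (auto intro!: derivative_eq_intros)
  have "((\<lambda>z. th (z - a)) has_derivative (\<lambda>h. gth (z - a) \<bullet> h)) (at z)"
    using has_derivative_compose[OF d1 th_deriv[rule_format, of "z - a"]] by simp
  then have "(prox_objective c a has_derivative (\<lambda>h. c \<bullet> h + \<beta> * (gth (z - a) \<bullet> h))) (at z)"
    unfolding prox_objective_def by (auto intro!: derivative_eq_intros)
  then show ?thesis by (simp add: inner_add_left)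
qed

lemma prox_objective_sublevel_bounded: "bounded {z. prox_objective c a z \<le> K}"
proof -
  obtain c0 where c0: "c0 > 0" "\<And>x. c0 * norm x \<le> nrm x" using is_norm_ge_norm[OF nrm] by blast
  define A where "A = norm c + \<beta> * norm (gth 0)"
  define B where "B = \<beta> * c0\<^sup>2 / 2"
  have A0: "A \<ge> 0" unfolding A_def using beta by auto
  have B0: "B > 0" unfolding B_def using beta c0 by auto
  have "norm z \<le> norm a + max 1 ((A + \<bar>K - c \<bullet> a\<bar>) / B)" if z: "prox_objective c a z \<le> K" for z
  proof -
    define w where "w = z - a"
    define d where "d = norm w"
    have "th w - th 0 - gth 0 \<bullet> (w - 0) \<ge> 1/2 * (nrm (w - 0))\<^sup>2"
      by (rule strongly_monotone_gradient_lower_bound[OF nrm th_deriv th_strong])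
    then have thw: "th w \<ge> gth 0 \<bullet> w + 1/2 * (nrm w)\<^sup>2" using th0 by simp
    have "gth 0 \<bullet> w \<ge> - (norm (gth 0) * d)" "c \<bullet> w \<ge> - (norm c * d)" unfolding d_def
      by (metis Cauchy_Schwarz_ineq2 abs_le_D1 minus_le_iff inner_minus_left norm_minus_cancel)+
    moreover have "(nrm w)\<^sup>2 \<ge> (c0 * d)\<^sup>2" unfolding d_def
      using c0(2)[of w] c0(1) by (intro power_mono) auto
    ultimately have th2: "th w \<ge> - (norm (gth 0) * d) + 1/2 * (c0 * d)\<^sup>2" and cw: "c \<bullet> w \<ge> - (norm c * d)"
      using thw by linarith+
    have "prox_objective c a z = c \<bullet> a + c \<bullet> w + \<beta> * th w"
      unfolding prox_objective_def w_def by (simp add: inner_diff_right)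
    also have "\<dots> \<ge> c \<bullet> a - norm c * d + \<beta> * (- (norm (gth 0) * d) + 1/2 * (c0 * d)\<^sup>2)"
      using cw th2 beta by (intro add_mono mult_left_mono) auto
    finally have "B * d\<^sup>2 - A * d \<le> K - c \<bullet> a" using z unfolding A_def B_def
      by (simp add: power2_eq_square algebra_simps)
    then have "d \<le> max 1 ((A + \<bar>K - c \<bullet> a\<bar>) / B)"
      by (intro quadratic_growth_le_imp_le[OF B0 A0]) (auto simp: d_def)
    moreover have "norm z \<le> norm a + d" unfolding d_def w_def by (metis norm_triangle_sub)
    ultimately show ?thesis by simp
  qed
  then show ?thesis unfolding bounded_iff by blast
qed

lemma prox_objective_attains_min: "\<exists>z\<in>X. \<forall>y\<in>X. prox_objective c a z \<le> prox_objective c a y"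
proof -
  obtain z0 where z0: "z0 \<in> X" using Xne by auto
  define K where "K = X \<inter> {z. prox_objective c a z \<le> prox_objective c a z0}"
  have "compact K" unfolding K_def compact_eq_bounded_closed
    by (intro conjI bounded_Int prox_objective_sublevel_bounded disjI2
        closed_Int Xcl closed_Collect_le prox_objective_continuous continuous_on_const)
  moreover have "K \<noteq> {}" using z0 unfolding K_def by auto
  ultimately obtain zm where zm: "zm \<in> K" "\<forall>y\<in>K. prox_objective c a zm \<le> prox_objective c a y"
    using continuous_attains_inf[OF _ _ continuous_on_subset[OF prox_objective_continuous]] by blast
  then show ?thesis unfolding K_def by force
qed

lemma prox_point_minimizes:
  "prox_point c a \<in> X" "\<forall>y\<in>X. prox_objective c a (prox_point c a) \<le> prox_objective c a y"
  using someI_ex[OF prox_objective_attains_min[of c a, unfolded Bex_def]] unfolding prox_point_def by auto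

lemma prox_point_optimality:
  "y \<in> X \<Longrightarrow> (c + \<beta> *\<^sub>R gth (prox_point c a - a)) \<bullet> (y - prox_point c a) \<ge> 0"
  by (rule minimizer_gradient_inner_nonneg[OF Xcvx prox_point_minimizes(1) _ _ prox_point_minimizes(2)])
    (auto intro: has_derivative_at_withinI prox_objective_has_derivative)

text \<open>Sum of the optimality conditions at the two prox points, combined with the strong
  monotonicity of \<open>gth\<close>.\<close>

lemma prox_point_dist_le:
  assumes c0: "c0 > 0" "\<And>x. c0 * norm x \<le> nrm x"
  shows "norm (prox_point c1 a1 - prox_point c2 a2) \<le>
     (norm (c1 - c2) + \<beta> * norm (gth (prox_point c2 a2 - a1) - gth (prox_point c2 a2 - a2))) / (\<beta> * c0\<^sup>2)"
proof -
  define z1 where "z1 = prox_point c1 a1"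
  define z2 where "z2 = prox_point c2 a2"
  define D where "D = norm (z1 - z2)"
  have f1: "(c1 + \<beta> *\<^sub>R gth (z1 - a1)) \<bullet> (z2 - z1) \<ge> 0" unfolding z1_def z2_def
    by (rule prox_point_optimality) (rule prox_point_minimizes)
  have f2: "(c2 + \<beta> *\<^sub>R gth (z2 - a2)) \<bullet> (z1 - z2) \<ge> 0" unfolding z1_def z2_def
    by (rule prox_point_optimality) (rule prox_point_minimizes)
  have st: "(gth (z1 - a1) - gth (z2 - a1)) \<bullet> (z1 - z2) \<ge> (nrm (z1 - z2))\<^sup>2"
    using th_strong[rule_format, of "z1 - a1" "z2 - a1"] by simp
  have "(nrm (z1 - z2))\<^sup>2 \<ge> (c0 * D)\<^sup>2" unfolding D_def
    using c0(2)[of "z1 - z2"] c0(1) by (intro power_mono) auto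
  have sum: "0 \<le> (c1 - c2) \<bullet> (z2 - z1) - \<beta> * ((gth (z1 - a1) - gth (z2 - a1)) \<bullet> (z1 - z2))
      + \<beta> * ((gth (z2 - a1) - gth (z2 - a2)) \<bullet> (z2 - z1))"
    using add_nonneg_nonneg[OF f1 f2]
    by (simp add: algebra_simps)
  have e1: "(c1 - c2) \<bullet> (z2 - z1) \<le> norm (c1 - c2) * D" unfolding D_def
    by (metis Cauchy_Schwarz_ineq2 abs_le_D1 norm_minus_commute)
  have e2: "(gth (z2 - a1) - gth (z2 - a2)) \<bullet> (z2 - z1) \<le> norm (gth (z2 - a1) - gth (z2 - a2)) * D"
    unfolding D_def by (metis Cauchy_Schwarz_ineq2 abs_le_D1 norm_minus_commute)
  have "\<beta> * (c0 * D)\<^sup>2 \<le> \<beta> * ((gth (z1 - a1) - gth (z2 - a1)) \<bullet> (z1 - z2))"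
    using st \<open>(nrm (z1 - z2))\<^sup>2 \<ge> (c0 * D)\<^sup>2\<close> beta by (intro mult_left_mono) auto
  then have "\<beta> * (c0 * D)\<^sup>2 \<le> norm (c1 - c2) * D + \<beta> * (norm (gth (z2 - a1) - gth (z2 - a2)) * D)"
    using sum e1 mult_left_mono[OF e2, of \<beta>] beta by linarith
  then have "D * (\<beta> * c0\<^sup>2 * D) \<le> D * (norm (c1 - c2) + \<beta> * norm (gth (z2 - a1) - gth (z2 - a2)))"
    by (simp add: power2_eq_square algebra_simps)
  then have "\<beta> * c0\<^sup>2 * D \<le> norm (c1 - c2) + \<beta> * norm (gth (z2 - a1) - gth (z2 - a2))"
  proof (cases "D = 0")
    case True then show ?thesis using beta by simp
  next
    case False then have "D > 0" unfolding D_def by simp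
    then show ?thesis using \<open>D * _ \<le> D * _\<close> by (simp add: mult_le_cancel_left)
  qed
  then show ?thesis using beta c0 unfolding D_def z1_def z2_def by (simp add: field_simps)
qed

lemma prox_point_continuous: "continuous_on UNIV (\<lambda>p. prox_point (fst p) (snd p))"
proof -
  obtain c0 where c0: "c0 > 0" "\<And>x. c0 * norm x \<le> nrm x" using is_norm_ge_norm[OF nrm] by blast
  have "isCont (\<lambda>p. prox_point (fst p) (snd p)) q" for q :: "'e \<times> 'e"
  proof -
    obtain c2 a2 where q: "q = (c2, a2)" by fastforce
    define z2 where "z2 = prox_point c2 a2"
    have gc: "isCont gth (z2 - a2)" using th_C1 by (simp add: continuous_on_eq_continuous_at)
    have "((\<lambda>p. (norm (fst p - c2) + \<beta> * norm (gth (z2 - snd p) - gth (z2 - a2))) / (\<beta> * c0\<^sup>2))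
        \<longlongrightarrow> (norm (c2 - c2) + \<beta> * norm (gth (z2 - a2) - gth (z2 - a2))) / (\<beta> * c0\<^sup>2)) (at q)"
      unfolding q
      using beta c0(1)
      by (intro tendsto_intros isCont_tendsto_compose[OF gc]) (auto intro!: tendsto_eq_intros)
    then have lim0: "((\<lambda>p. (norm (fst p - c2) + \<beta> * norm (gth (z2 - snd p) - gth (z2 - a2))) / (\<beta> * c0\<^sup>2))
        \<longlongrightarrow> 0) (at q)" by simp
    have "((\<lambda>p. prox_point (fst p) (snd p) - z2) \<longlongrightarrow> 0) (at q)"
      by (rule Lim_null_comparison[OF _ lim0]) (use prox_point_dist_le[OF c0] in \<open>auto simp: z2_def\<close>)
    then show ?thesis unfolding isCont_def q z2_def by (simp add: Lim_null[symmetric])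
  qed
  then show ?thesis by (simp add: continuous_at_imp_continuous_on)
qed

lemma prox_eq_prox_point: "prox th gth X \<beta> u x x0 = prox_point (u - \<beta> *\<^sub>R gth (x - x0)) x0"
proof -
  let ?c = "u - \<beta> *\<^sub>R gth (x - x0)"
  have key: "u \<bullet> z + \<beta> * bregman th gth x0 x z
      = prox_objective ?c x0 z + (\<beta> * (gth (x - x0) \<bullet> x) - \<beta> * th (x - x0))" for z
    unfolding bregman_def prox_objective_def by (simp add: algebra_simps)
  have "(\<lambda>z. z \<in> X \<and> (\<forall>y\<in>X. u \<bullet> z + \<beta> * bregman th gth x0 x z \<le> u \<bullet> y + \<beta> * bregman th gth x0 x y))
      = (\<lambda>z. z \<in> X \<and> (\<forall>y\<in>X. prox_objective ?c x0 z \<le> prox_objective ?c x0 y))"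
    unfolding key by simp
  then show ?thesis unfolding prox_def prox_point_def by simp
qed

lemma prox_mem: "prox th gth X \<beta> u x x0 \<in> X"
  unfolding prox_eq_prox_point by (rule prox_point_minimizes)

lemma prox_three_point:
  assumes y: "y \<in> X" and z_def: "z = prox th gth X \<beta> u x x0"
  shows "u \<bullet> (z - y) \<le> \<beta> * (bregman th gth x0 x y - bregman th gth x0 z y - bregman th gth x0 x z)"
proof -
  have foc: "(u - \<beta> *\<^sub>R gth (x - x0) + \<beta> *\<^sub>R gth (z - x0)) \<bullet> (y - z) \<ge> 0"
    unfolding z_def prox_eq_prox_point by (rule prox_point_optimality[OF y])
  have id: "bregman th gth x0 x y - bregman th gth x0 z y - bregman th gth x0 x z
      = (gth (z - x0) - gth (x - x0)) \<bullet> (y - z)"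
    unfolding bregman_def by (simp add: algebra_simps)
  show ?thesis unfolding id using foc
    by (simp add: algebra_simps)
qed

lemma bregman_ge_half_sq: "bregman th gth a y z \<ge> 1/2 * (nrm (z - y))\<^sup>2"
  unfolding bregman_def
  using strongly_monotone_gradient_lower_bound[OF nrm th_deriv th_strong, of "z - a" "y - a"] by simp

lemma borel_measurable_prox:
  assumes "u \<in> borel_measurable M" "x \<in> borel_measurable M" "x0 \<in> borel_measurable M"
  shows "(\<lambda>s. prox th gth X \<beta> (u s) (x s) (x0 s)) \<in> borel_measurable M"
proof -
  have gm: "gth \<in> borel_measurable borel" using th_C1 by (rule borel_measurable_continuous_onI)
  have cm: "(\<lambda>s. u s - \<beta> *\<^sub>R gth (x s - x0 s)) \<in> borel_measurable M"
    using assms by (intro borel_measurable_diff borel_measurable_scaleR measurable_compose[OF _ gm]) auto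
  have pm: "(\<lambda>s. (u s - \<beta> *\<^sub>R gth (x s - x0 s), x0 s)) \<in> borel_measurable M"
    using cm assms(3) by (intro borel_measurable_Pair)
  have "(\<lambda>s. prox_point (fst (u s - \<beta> *\<^sub>R gth (x s - x0 s), x0 s)) (snd (u s - \<beta> *\<^sub>R gth (x s - x0 s), x0 s)))
     \<in> borel_measurable M"
    by (rule borel_measurable_continuous_on[OF prox_point_continuous pm])
  then show ?thesis unfolding prox_eq_prox_point by simp
qed

end

section \<open>Independence of the current iterate and the next sample\<close>

lemma Int_stable_vimage_sets: "Int_stable {X -` A \<inter> \<Omega> |A. A \<in> sets S}"
proof (safe intro!: Int_stableI)
  fix A B assume "A \<in> sets S" "B \<in> sets S"
  then show "\<exists>C. (X -` A \<inter> \<Omega>) \<inter> (X -` B \<inter> \<Omega>) = X -` C \<inter> \<Omega> \<and> C \<in> sets S"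
    by (intro exI[of _ "A \<inter> B"]) auto
qed

context prob_space
begin

lemma distr_pair_indep_rvs:
  assumes ind: "indep_rvs M S Y T W" and Y: "Y \<in> measurable M S" and W: "W \<in> measurable M T"
    and dW: "distr M T W = T"
  shows "distr M (S \<Otimes>\<^sub>M T) (\<lambda>x. (Y x, W x)) = distr M S Y \<Otimes>\<^sub>M T"
proof -
  interpret T: prob_space T using prob_space_distr[OF W] dW by simp
  interpret D: prob_space "distr M S Y" using prob_space_distr[OF Y] .
  show ?thesis
  proof (rule pair_measure_eqI[symmetric])
    show "sigma_finite_measure (distr M S Y)" "sigma_finite_measure T"
      by (rule D.sigma_finite_measure_axioms T.sigma_finite_measure_axioms)+
    show "sets (distr M S Y \<Otimes>\<^sub>M T) = sets (distr M (S \<Otimes>\<^sub>M T) (\<lambda>x. (Y x, W x)))"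
      by (simp add: sets_pair_measure)
    fix A B assume A: "A \<in> sets (distr M S Y)" and B: "B \<in> sets T"
    have pm: "(\<lambda>x. (Y x, W x)) \<in> measurable M (S \<Otimes>\<^sub>M T)" using Y W by measurable
    have "emeasure (distr M (S \<Otimes>\<^sub>M T) (\<lambda>x. (Y x, W x))) (A \<times> B)
        = emeasure M ((Y -` A \<inter> space M) \<inter> (W -` B \<inter> space M))"
      using A B by (subst emeasure_distr[OF pm]) (auto intro!: arg_cong[where f="emeasure M"])
    also have "\<dots> = ennreal (prob (Y -` A \<inter> space M) * prob (W -` B \<inter> space M))"
      using indep_setD[OF ind[unfolded indep_rvs_def] in_vimage_algebra in_vimage_algebra] A B
      by (simp add: emeasure_eq_measure)
    also have "\<dots> = emeasure (distr M S Y) A * emeasure (distr M T W) B"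
      using A B by (simp add: emeasure_distr[OF Y] emeasure_distr[OF W] emeasure_eq_measure ennreal_mult)
    finally show "emeasure (distr M S Y) A * emeasure T B
        = emeasure (distr M (S \<Otimes>\<^sub>M T) (\<lambda>x. (Y x, W x))) (A \<times> B)"
      using dW by simp
  qed
qed

lemma nn_integral_indep_rvs:
  fixes S :: "'b measure" and T :: "'c measure" and f :: "'b \<times> 'c \<Rightarrow> ennreal"
  assumes ind: "indep_rvs M S Y T W" and Y: "Y \<in> measurable M S" and W: "W \<in> measurable M T"
    and dW: "distr M T W = T"
    and f: "f \<in> borel_measurable (S \<Otimes>\<^sub>M T)"
  shows "(\<integral>\<^sup>+ s. f (Y s, W s) \<partial>M) = (\<integral>\<^sup>+ s. (\<integral>\<^sup>+ \<omega>. f (Y s, \<omega>) \<partial>T) \<partial>M)"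
proof -
  interpret T: prob_space T using prob_space_distr[OF W] dW by simp
  have "(\<integral>\<^sup>+ s. f (Y s, W s) \<partial>M) = integral\<^sup>N (distr M (S \<Otimes>\<^sub>M T) (\<lambda>x. (Y x, W x))) f"
    using Y W f by (intro nn_integral_distr[symmetric]) auto
  also have "\<dots> = integral\<^sup>N (distr M S Y \<Otimes>\<^sub>M T) f" by (simp add: distr_pair_indep_rvs[OF ind Y W dW])
  also have "\<dots> = (\<integral>\<^sup>+ y. \<integral>\<^sup>+ \<omega>. f (y, \<omega>) \<partial>T \<partial>distr M S Y)"
    by (rule T.nn_integral_fst[symmetric]) (use f in simp)
  also have "\<dots> = (\<integral>\<^sup>+ s. (\<integral>\<^sup>+ \<omega>. f (Y s, \<omega>) \<partial>T) \<partial>M)"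
    by (rule nn_integral_distr) (use Y f T.borel_measurable_nn_integral_fst[of f S] in auto)
  finally show ?thesis .
qed

lemma integral_indep_rvs:
  fixes S :: "'b measure" and T :: "'c measure" and f :: "'b \<times> 'c \<Rightarrow> real"
  assumes ind: "indep_rvs M S Y T W" and Y: "Y \<in> measurable M S" and W: "W \<in> measurable M T"
    and dW: "distr M T W = T"
    and f: "f \<in> borel_measurable (S \<Otimes>\<^sub>M T)" and int: "integrable M (\<lambda>s. f (Y s, W s))"
  shows "(\<integral> s. f (Y s, W s) \<partial>M) = (\<integral> s. (\<integral> \<omega>. f (Y s, \<omega>) \<partial>T) \<partial>M)"
proof -
  have pm: "(\<lambda>x. (Y x, W x)) \<in> measurable M (S \<Otimes>\<^sub>M T)" using Y W by measurable
  interpret T: prob_space T using prob_space_distr[OF W] dW by simp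
  interpret D: prob_space "distr M S Y" using prob_space_distr[OF Y] .
  interpret DT: pair_sigma_finite "distr M S Y" T ..
  have "integrable (distr M S Y \<Otimes>\<^sub>M T) f"
    using int integrable_distr_eq[OF pm f] by (simp add: distr_pair_indep_rvs[OF ind Y W dW])
  then have "(\<integral> y. \<integral> \<omega>. f (y, \<omega>) \<partial>T \<partial>distr M S Y) = integral\<^sup>L (distr M S Y \<Otimes>\<^sub>M T) f"
    by (rule DT.integral_fst')
  also have "\<dots> = integral\<^sup>L (distr M (S \<Otimes>\<^sub>M T) (\<lambda>x. (Y x, W x))) f"
    by (simp add: distr_pair_indep_rvs[OF ind Y W dW])
  also have "\<dots> = (\<integral> s. f (Y s, W s) \<partial>M)" by (rule integral_distr[OF pm f])
  finally show ?thesis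
    using integral_distr[OF Y, of "\<lambda>y. \<integral> \<omega>. f (y, \<omega>) \<partial>T"]
      T.borel_measurable_lebesgue_integral[of "\<lambda>x y. f (x, y)" S] f by simp
qed

text \<open>Index \<open>None\<close> stands for the starting point \<open>x0\<close>, index \<open>Some j\<close> for the sample \<open>om j\<close>.\<close>

definition start_sample_events ::
    "'b measure \<Rightarrow> ('a \<Rightarrow> 'b) \<Rightarrow> 'w measure \<Rightarrow> (nat \<Rightarrow> 'a \<Rightarrow> 'w) \<Rightarrow> nat option \<Rightarrow> 'a set set" where
  "start_sample_events S x0 P om i = (case i of
      None \<Rightarrow> {x0 -` A \<inter> space M | A. A \<in> sets S}
    | Some j \<Rightarrow> {om j -` A \<inter> space M | A. A \<in> sets P})"
lemma sample_events_Inter_in_vimage_algebra: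
  fixes om :: "nat \<Rightarrow> 'a \<Rightarrow> 'w" and J :: "nat set"
  assumes om_meas: "\<forall>i. om i \<in> measurable M P"
    and J: "finite J" "J \<noteq> {}" and C: "\<And>j. j \<in> J \<Longrightarrow> C j \<in> sets P"
  shows "(\<Inter>j\<in>J. om j -` C j \<inter> space M) \<in> sets (vimage_algebra (space M) (\<lambda>s i. om i s) (Pi\<^sub>M UNIV (\<lambda>_. P)))"
proof -
  define Q where "Q = (\<Inter>j\<in>J. (\<lambda>f. f j) -` C j \<inter> space (Pi\<^sub>M UNIV (\<lambda>_::nat. P)))"
  have "Q \<in> sets (Pi\<^sub>M UNIV (\<lambda>_::nat. P))" unfolding Q_def
    using C by (intro sets.finite_INT[OF J] measurable_sets[OF measurable_component_singleton]) auto
  moreover have "(\<Inter>j\<in>J. om j -` C j \<inter> space M) = (\<lambda>s i. om i s) -` Q \<inter> space M"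
    using measurable_space[OF om_meas[rule_format]] J(2) by (auto simp: Q_def space_PiM)
  ultimately show ?thesis using in_vimage_algebra by metis
qed

lemma prob_sample_events_Inter:
  fixes om :: "nat \<Rightarrow> 'a \<Rightarrow> 'w" and J :: "nat set"
  assumes om_meas: "\<forall>i. om i \<in> measurable M P" and om_indep: "indep_vars (\<lambda>_. P) om UNIV"
    and J: "finite J" "J \<noteq> {}" and A: "\<forall>j\<in>J. A j \<in> {om j -` B \<inter> space M |B. B \<in> sets P}"
  shows "prob (\<Inter>j\<in>J. A j) = (\<Prod>j\<in>J. prob (A j))"
    and "(\<Inter>j\<in>J. A j) \<in> sets (vimage_algebra (space M) (\<lambda>s i. om i s) (Pi\<^sub>M UNIV (\<lambda>_. P)))"
proof -
  show "prob (\<Inter>j\<in>J. A j) = (\<Prod>j\<in>J. prob (A j))"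
    using om_indep unfolding indep_vars_def2 by (intro indep_setsD[OF _ _ J(2,1) A]) auto
  obtain C where C: "\<forall>j\<in>J. C j \<in> sets P \<and> A j = om j -` C j \<inter> space M"
    using bchoice[OF A[unfolded mem_Collect_eq]] by blast
  then show "(\<Inter>j\<in>J. A j) \<in> sets (vimage_algebra (space M) (\<lambda>s i. om i s) (Pi\<^sub>M UNIV (\<lambda>_. P)))"
    using sample_events_Inter_in_vimage_algebra[OF om_meas J, of C] by simp
qed

lemma indep_sets_start_sample_events:
  fixes S :: "'b measure" and x0 :: "'a \<Rightarrow> 'b" and om :: "nat \<Rightarrow> 'a \<Rightarrow> 'w"
  assumes om_meas: "\<forall>i. om i \<in> measurable M P"
    and om_indep: "indep_vars (\<lambda>_. P) om UNIV"
    and x0_meas: "x0 \<in> measurable M S"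
    and x0_indep: "indep_rvs M S x0 (Pi\<^sub>M UNIV (\<lambda>_. P)) (\<lambda>s i. om i s)"
  shows "indep_sets (start_sample_events S x0 P om) UNIV"
proof (rule indep_setsI)
  show "start_sample_events S x0 P om i \<subseteq> events" for i
    using x0_meas measurable_sets[OF om_meas[rule_format]]
    by (cases i) (auto simp: start_sample_events_def)
next
  fix A :: "nat option \<Rightarrow> 'a set" and J :: "nat option set"
  assume J: "J \<noteq> {}" "finite J" and A: "\<forall>j\<in>J. A j \<in> start_sample_events S x0 P om j"
  define J' where "J' = Some -` J"
  have J': "finite J'" unfolding J'_def using J(2) by (rule finite_vimageI) auto
  have AS: "\<forall>j\<in>J'. A (Some j) \<in> {om j -` B \<inter> space M |B. B \<in> sets P}"
    using A unfolding J'_def start_sample_events_def by auto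
  note samples = prob_sample_events_Inter[OF om_meas om_indep J' _ AS]
  show "prob (\<Inter>j\<in>J. A j) = (\<Prod>j\<in>J. prob (A j))"
  proof (cases "None \<in> J")
    case False
    then have "J = Some ` J'" unfolding J'_def by (auto simp: image_iff) (metis option.exhaust)
    with J samples(1) show ?thesis by (simp add: prod.reindex image_image)
  next
    case True
    then have J_eq: "J = insert None (Some ` J')" unfolding J'_def by (auto simp: image_iff)
    have "A None \<in> {x0 -` B \<inter> space M |B. B \<in> sets S}"
      using A True unfolding start_sample_events_def by force
    then obtain B where "B \<in> sets S" "A None = x0 -` B \<inter> space M" by blast
    then have A0: "A None \<in> sets (vimage_algebra (space M) x0 S)" by (simp add: in_vimage_algebra)
    show ?thesis
    proof (cases "J' = {}")
      case False
      have "prob (A None \<inter> (\<Inter>j\<in>J'. A (Some j))) = prob (A None) * prob (\<Inter>j\<in>J'. A (Some j))"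
        by (rule indep_setD[OF x0_indep[unfolded indep_rvs_def] A0 samples(2)[OF False]])
      with samples(1)[OF False] J' show ?thesis unfolding J_eq by (simp add: prod.reindex image_image)
    qed (simp add: J_eq)
  qed
qed

lemma indep_set_start_past_samples_next_sample:
  fixes S :: "'b measure" and x0 :: "'a \<Rightarrow> 'b" and om :: "nat \<Rightarrow> 'a \<Rightarrow> 'w"
  assumes ind: "indep_sets (start_sample_events S x0 P om) UNIV"
  shows "indep_set (sigma_sets (space M) (\<Union>i\<in>insert None (Some ` {..<k}). start_sample_events S x0 P om i))
                   (sigma_sets (space M) (start_sample_events S x0 P om (Some k)))"
proof -
  define I where "I b = (if b then insert None (Some ` {..<k}) else {Some k})" for b
  have st: "Int_stable (start_sample_events S x0 P om i)" for i
    by (cases i) (simp_all add: start_sample_events_def Int_stable_vimage_sets)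
  have "indep_sets (\<lambda>b. sigma_sets (space M) (\<Union>i\<in>I b. start_sample_events S x0 P om i)) UNIV"
  proof (rule indep_sets_collect_sigma)
    show "indep_sets (start_sample_events S x0 P om) (\<Union>j\<in>UNIV. I j)"
      by (rule indep_sets_mono_index[OF _ ind]) simp
    show "disjoint_family_on I UNIV" unfolding disjoint_family_on_def I_def by auto
  qed (rule st)
  then show ?thesis unfolding indep_set_def
    by (rule indep_sets_mono_sets) (auto simp: I_def split: bool.split)
qed



lemma indep_rvs_past_next_sample:
  fixes S :: "'b measure" and x0 :: "'a \<Rightarrow> 'b" and om :: "nat \<Rightarrow> 'a \<Rightarrow> 'w" and Z :: "'a \<Rightarrow> 'c"
  assumes om_meas: "\<forall>i. om i \<in> measurable M P"
    and om_indep: "indep_vars (\<lambda>_. P) om UNIV"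
    and x0_meas: "x0 \<in> measurable M S"
    and x0_indep: "indep_rvs M S x0 (Pi\<^sub>M UNIV (\<lambda>_. P)) (\<lambda>s i. om i s)"
    and Z_meas: "\<And>N :: 'a measure. x0 \<in> measurable N S \<Longrightarrow> \<forall>j<k. om j \<in> measurable N P \<Longrightarrow> Z \<in> measurable N T"
  shows "indep_rvs M T Z P (om k)"
proof -
  let ?E = "start_sample_events S x0 P om"
  define Gs where "Gs = (\<Union>i\<in>insert None (Some ` {..<k}). ?E i)"
  have ik: "indep_set (sigma_sets (space M) Gs) (sigma_sets (space M) (?E (Some k)))"
    unfolding Gs_def
    by (intro indep_set_start_past_samples_next_sample
        indep_sets_start_sample_events[OF om_meas om_indep x0_meas x0_indep])
  define N where "N = sigma (space M) Gs"
  have Gsub: "Gs \<subseteq> Pow (space M)" unfolding Gs_def start_sample_events_def by (auto split: option.split)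
  have spN: "space N = space M" and setsN: "sets N = sigma_sets (space M) Gs"
    unfolding N_def using Gsub by simp_all
  have "x0 \<in> measurable N S"
  proof (rule measurableI)
    fix A assume "A \<in> sets S"
    then have "x0 -` A \<inter> space M \<in> Gs" unfolding Gs_def start_sample_events_def by force
    then show "x0 -` A \<inter> space N \<in> sets N" unfolding spN setsN by auto
  qed (use measurable_space[OF x0_meas] spN in auto)
  moreover have "om j \<in> measurable N P" if "j < k" for j
  proof (rule measurableI)
    fix A assume "A \<in> sets P"
    then have "om j -` A \<inter> space M \<in> Gs" unfolding Gs_def start_sample_events_def using that by force
    then show "om j -` A \<inter> space N \<in> sets N" unfolding spN setsN by auto
  qed (use measurable_space[OF om_meas[rule_format, of j]] spN in auto)
  ultimately have ZN: "Z \<in> measurable N T" using Z_meas by blast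
  have "{Z -` A \<inter> space M |A. A \<in> sets T} \<subseteq> sigma_sets (space M) Gs"
    using measurable_sets[OF ZN] unfolding spN setsN by blast
  then have "sigma_sets (space M) {Z -` A \<inter> space M |A. A \<in> sets T} \<subseteq> sigma_sets (space M) Gs"
    by (rule sigma_sets_mono)
  with ik show ?thesis
    unfolding indep_rvs_def sets_vimage_algebra indep_set_def
    by (elim indep_sets_mono_sets) (auto simp: start_sample_events_def split: bool.split)
qed

end

section \<open>Stochastic mirror descent\<close>

lemma integrable_nonneg_le:
  fixes f h :: "'a \<Rightarrow> real"
  assumes "f \<in> borel_measurable M" "integrable M h" "\<And>s. s \<in> space M \<Longrightarrow> 0 \<le> f s \<and> f s \<le> h s"
  shows "integrable M f"
  by (rule Bochner_Integration.integrable_bound[OF assms(2,1)]) (use assms(3) in force)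

lemma sum_le_of_recursive_inequality:
  fixes a d v :: "nat \<Rightarrow> real" and \<beta> q c :: real
  assumes rec: "\<And>k. a (Suc k) + \<beta> * v (Suc k) \<le> \<beta> * v k + q * d k + c"
    and a: "\<And>k. 0 \<le> a k" and v: "\<And>k. 0 \<le> v k" and d: "\<And>k. k \<ge> 1 \<Longrightarrow> d k \<le> a k"
    and q: "0 \<le> q" "q \<le> 1/2" and \<beta>: "0 \<le> \<beta>" and n: "n \<ge> 1"
  shows "(\<Sum>i=1..n. a i) \<le> 2 * (\<beta> * v 0 + q * d 0 + real n * c)"
proof -
  have telescoped: "(\<Sum>i=1..Suc n. a i) + \<beta> * v (Suc n)
      \<le> \<beta> * v 0 + q * d 0 + q * (\<Sum>i=1..n. a i) + real (Suc n) * c" for n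
  proof (induction n)
    case (Suc n)
    have "q * d (Suc n) \<le> q * a (Suc n)" using d[of "Suc n"] q by (intro mult_left_mono) auto
    then show ?case using Suc.IH rec[of "Suc n"] by (simp add: algebra_simps)
  qed (use rec[of 0] in simp)
  obtain n' where n': "n = Suc n'" using n by (cases n) auto
  have "q * (\<Sum>i=1..n'. a i) \<le> 1/2 * (\<Sum>i=1..n'. a i)"
    using q by (intro mult_right_mono sum_nonneg a) auto
  also have "\<dots> \<le> 1/2 * (\<Sum>i=1..n. a i)" unfolding n' by (simp add: a)
  finally show ?thesis
    using telescoped[of n'] mult_nonneg_nonneg[OF \<beta> v, of "Suc n'"] unfolding n' distrib_left by linarith
qed

lemma integrable_integral_le_of_nn_integral_le:
  fixes f :: "'a \<Rightarrow> real"
  assumes f: "f \<in> borel_measurable M" "\<And>s. s \<in> space M \<Longrightarrow> 0 \<le> f s"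
    and le: "(\<integral>\<^sup>+ s. ennreal (f s) \<partial>M) \<le> ennreal B" and B: "0 \<le> B"
  shows "integrable M f" "(\<integral>s. f s \<partial>M) \<le> B"
proof -
  show int: "integrable M f"
    by (rule integrableI_nonneg[OF f(1)]) (use f(2) le in \<open>auto intro: le_less_trans\<close>)
  have "ennreal (\<integral>s. f s \<partial>M) = (\<integral>\<^sup>+ s. ennreal (f s) \<partial>M)"
    by (rule nn_integral_eq_integral[symmetric, OF int]) (use f(2) in auto)
  with le have "ennreal (\<integral>s. f s \<partial>M) \<le> ennreal B" by simp
  then show "(\<integral>s. f s \<partial>M) \<le> B" using ennreal_le_iff[OF B] by blast
qed

text \<open>The hypotheses of \<open>proposition1\<close> that the argument uses.\<close>

locale smd =
  fixes nrm :: "'e::euclidean_space \<Rightarrow> real" and X :: "'e set"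
    and P :: "'w measure" and dG :: "'e \<Rightarrow> 'w \<Rightarrow> 'e"
    and g :: "'e \<Rightarrow> real" and gradg :: "'e \<Rightarrow> 'e"
    and L \<nu> \<kappa> \<kappa>' :: real and xs :: 'e
    and th :: "'e \<Rightarrow> real" and gth :: "'e \<Rightarrow> 'e" and \<Theta> :: real
    and M :: "'s measure" and om :: "nat \<Rightarrow> 's \<Rightarrow> 'w" and x0 :: "'s \<Rightarrow> 'e"
    and R \<beta> :: real
  assumes norm: "is_norm nrm"
    and X: "convex X" "closed X" "interior X \<noteq> {}"
    and P: "prob_space P"
    and g_convex: "convex_on X g"
    and g_diff: "\<forall>x\<in>X. (g has_derivative (\<lambda>h. gradg x \<bullet> h)) (at x within X)"
    and g_lip: "\<forall>x\<in>X. \<forall>x'\<in>X. dual_norm nrm (gradg x - gradg x') \<le> L * nrm (x - x')"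
    and xs_min: "xs \<in> X" "\<forall>x\<in>X. g xs \<le> g x"
    and dG_meas: "(\<lambda>(x, \<omega>). dG x \<omega>) \<in> borel_measurable (borel \<Otimes>\<^sub>M P)"
    and dG_unbiased: "\<forall>x\<in>X. integrable P (dG x) \<and> (\<integral>\<omega>. dG x \<omega> \<partial>P) = gradg x"
    and params: "1 \<le> \<kappa>" "1 \<le> \<kappa>'" "L \<le> \<nu>"
    and S1: "\<forall>x\<in>X. sigma2 nrm P dG gradg x
               \<le> ennreal (\<kappa> * \<nu> * (g x - g xs - gradg xs \<bullet> (x - xs))
                         + \<kappa>' * enn2real (sigma2 nrm P dG gradg xs))"
    and th_deriv: "\<forall>x. (th has_derivative (\<lambda>h. gth x \<bullet> h)) (at x)"
    and th_C1: "continuous_on UNIV gth"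
    and th_strong: "\<forall>x x'. (gth x - gth x') \<bullet> (x - x') \<ge> (nrm (x - x'))\<^sup>2"
    and th_min: "th 0 = 0" "\<forall>x. th x \<ge> 0"
    and th_bound: "\<forall>x. th x \<le> \<Theta> * (nrm x)\<^sup>2"
    and M: "prob_space M"
    and om_meas: "\<forall>i. om i \<in> measurable M P"
    and om_distr: "\<forall>i. distr M P (om i) = P"
    and om_indep: "prob_space.indep_vars M (\<lambda>_. P) om UNIV"
    and x0_meas: "x0 \<in> borel_measurable M"
    and x0_indep: "indep_rvs M borel x0 (Pi\<^sub>M UNIV (\<lambda>_::nat. P)) (\<lambda>s i. om i s)"
    and x0_in: "\<forall>s\<in>space M. x0 s \<in> X"
    and x0_R: "(\<integral>\<^sup>+ s. ennreal ((nrm (x0 s - xs))\<^sup>2) \<partial>M) \<le> ennreal (R\<^sup>2)"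
    and beta: "\<beta> > 0" "\<beta> \<ge> 2 * \<kappa> * \<nu>"
begin

sublocale prox: bregman_prox nrm th gth X \<beta>
  using norm th_deriv th_C1 th_strong th_min X beta interior_subset[of X]
  by unfold_locales auto

sublocale Mp: prob_space M by (rule M)
sublocale Pp: prob_space P by (rule P)

text \<open>Since \<open>X\<close> has interior points, it contains two distinct points.\<close>

lemma L_nonneg: "0 \<le> L"
proof -
  obtain x e where e: "e > 0" "ball x e \<subseteq> X" using X(3) mem_interior by blast
  obtain b :: 'e where b: "b \<in> Basis" using nonempty_Basis by blast
  define y where "y = x + (e / 2) *\<^sub>R b"
  have "x \<in> X" "y \<in> X" using e b by (auto simp: y_def dist_norm intro!: subsetD[OF e(2)])
  then have "0 \<le> L * nrm (x - y)" using g_lip dual_norm_nonneg[OF norm] by (meson order_trans)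
  moreover have "nrm (x - y) > 0" using e b by (intro is_norm_pos[OF norm]) (auto simp: y_def)
  ultimately show ?thesis by (simp add: zero_le_mult_iff)
qed

lemma nu_nonneg: "0 \<le> \<nu>"
  using L_nonneg params(3) by linarith

lemma L_le_half_beta: "L \<le> \<beta> / 2"
  using params beta nu_nonneg mult_right_mono[OF params(1) nu_nonneg] by linarith

lemma Theta_nonneg: "\<Theta> \<ge> 0"
proof -
  obtain b :: 'e where "b \<in> Basis" using nonempty_Basis by blast
  then have "(nrm b)\<^sup>2 > 0" using is_norm_pos[OF norm, of b] by (auto simp: nonzero_Basis)
  moreover have "0 \<le> \<Theta> * (nrm b)\<^sup>2" using th_min th_bound by (meson order_trans)
  ultimately show ?thesis by (simp add: zero_le_mult_iff)
qed

lemma gth_zero: "gth 0 = 0"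
proof -
  have "gth 0 \<bullet> (- gth 0 - 0) \<ge> 0"
    by (rule minimizer_gradient_inner_nonneg[of UNIV 0 "- gth 0" th gth])
      (use th_deriv th_min in \<open>auto intro: has_derivative_at_withinI\<close>)
  then show ?thesis by (metis diff_zero inner_minus_right inner_gt_zero_iff neg_0_le_iff_le not_le)
qed

end

context smd
begin

definition iterate :: "nat \<Rightarrow> 's \<Rightarrow> 'e" where
  "iterate k s = smd_iter th gth X \<beta> dG (\<lambda>j. om j s) (x0 s) k"

lemma iterate_0: "iterate 0 s = x0 s"
  unfolding iterate_def by simp

lemma iterate_Suc: "iterate (Suc k) s = prox th gth X \<beta> (dG (iterate k s) (om k s)) (iterate k s) (x0 s)"
  unfolding iterate_def by simp

lemma iterate_mem: "s \<in> space M \<Longrightarrow> iterate k s \<in> X"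
  by (cases k) (auto simp: iterate_0 iterate_Suc x0_in prox.prox_mem)

lemma measurable_iterate:
  assumes "x0 \<in> borel_measurable N" "\<forall>j<k. om j \<in> measurable N P"
  shows "iterate k \<in> borel_measurable N"
  using assms(2)
proof (induction k)
  case (Suc k)
  then have "(\<lambda>s. (iterate k s, om k s)) \<in> measurable N (borel \<Otimes>\<^sub>M P)" by (auto intro: measurable_Pair)
  from measurable_compose[OF this dG_meas] Suc assms(1) show ?case
    unfolding iterate_Suc[abs_def] by (auto intro: prox.borel_measurable_prox)
qed (use assms(1) in \<open>simp add: iterate_0[abs_def]\<close>)

lemma borel_measurable_iterate: "iterate k \<in> borel_measurable M"
  by (rule measurable_iterate[OF x0_meas]) (use om_meas in auto)

lemma indep_rvs_iterate_sample: "indep_rvs M borel (iterate k) P (om k)"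
  by (rule Mp.indep_rvs_past_next_sample[OF om_meas om_indep x0_meas x0_indep measurable_iterate])

text \<open>Three-point inequality of the prox step, descent lemma and convexity of \<open>g\<close>; the
  noise term \<open>\<zeta> \<bullet> (x - z)\<close> is absorbed by Young's inequality into the slack
  \<open>(\<beta> - L) / 2 * nrm (z - x)\<^sup>2\<close> left by the Bregman term.\<close>

lemma prox_step_inequality:
  assumes x: "x \<in> X" and z_def: "z = prox th gth X \<beta> (dG x \<omega>) x a"
  shows "g z - g xs + \<beta> * bregman th gth a z xs
     \<le> \<beta> * bregman th gth a x xs - (dG x \<omega> - gradg x) \<bullet> (x - xs) + (dual_norm nrm (dG x \<omega> - gradg x))\<^sup>2 / \<beta>"
proof -
  define \<zeta> where "\<zeta> = dG x \<omega> - gradg x"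
  define n where "n = nrm (z - x)"
  define c where "c = \<beta> - L"
  have c: "c \<ge> \<beta> / 2" "c > 0" unfolding c_def using L_le_half_beta beta by auto
  have zX: "z \<in> X" unfolding z_def by (rule prox.prox_mem)
  have "dG x \<omega> \<bullet> (z - xs) \<le> \<beta> * (bregman th gth a x xs - bregman th gth a z xs - bregman th gth a x z)"
    by (rule prox.prox_three_point[OF xs_min(1)]) (simp add: z_def)
  then have three_point:
    "dG x \<omega> \<bullet> (z - xs) \<le> \<beta> * bregman th gth a x xs - \<beta> * bregman th gth a z xs - \<beta> * bregman th gth a x z"
    by (simp add: algebra_simps)
  have "\<beta> / 2 * n\<^sup>2 \<le> \<beta> * bregman th gth a x z"
    using mult_left_mono[OF prox.bregman_ge_half_sq[where a = a and y = x and z = z] less_imp_le[OF beta(1)]]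
    unfolding n_def by simp
  moreover have "g z \<le> g x + gradg x \<bullet> (z - x) + L / 2 * n\<^sup>2" unfolding n_def
    by (rule lipschitz_gradient_upper_bound[OF norm X(1) x zX g_diff g_lip])
  moreover have "g x + gradg x \<bullet> (xs - x) \<le> g xs"
    by (rule convex_on_gradient_inequality[OF X(1) x xs_min(1) g_diff g_convex])
  moreover have "gradg x \<bullet> (z - x) - gradg x \<bullet> (xs - x) = dG x \<omega> \<bullet> (z - xs) - \<zeta> \<bullet> (x - xs) + \<zeta> \<bullet> (x - z)"
    unfolding \<zeta>_def by (simp add: algebra_simps)
  moreover have "\<zeta> \<bullet> (x - z) \<le> (dual_norm nrm \<zeta>)\<^sup>2 / \<beta> + c / 2 * n\<^sup>2"
  proof -
    have "\<zeta> \<bullet> (x - z) \<le> dual_norm nrm \<zeta> * n"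
      using inner_le_dual_norm_mult[OF norm, of \<zeta> "x - z"] is_norm_minus_commute[OF norm, of x z]
      unfolding n_def by simp
    also have "\<dots> \<le> (dual_norm nrm \<zeta>)\<^sup>2 / (2 * c) + c * n\<^sup>2 / 2" by (rule mult_le_weighted_squares[OF c(2)])
    also have "(dual_norm nrm \<zeta>)\<^sup>2 / (2 * c) \<le> (dual_norm nrm \<zeta>)\<^sup>2 / \<beta>"
      using c beta by (intro divide_left_mono) auto
    finally show ?thesis by simp
  qed
  moreover have "c / 2 * n\<^sup>2 + L / 2 * n\<^sup>2 = \<beta> / 2 * n\<^sup>2" unfolding c_def by (simp add: field_simps)
  ultimately show ?thesis using three_point unfolding \<zeta>_def by linarith
qed

end

context smd
begin

definition noise :: "nat \<Rightarrow> 's \<Rightarrow> 'e" where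
  "noise k s = dG (iterate k s) (om k s) - gradg (iterate k s)"

definition potential :: "nat \<Rightarrow> 's \<Rightarrow> real" where
  "potential k s = bregman th gth (x0 s) (iterate k s) xs"

definition gap :: "nat \<Rightarrow> 's \<Rightarrow> real" where
  "gap k s = g (iterate k s) - g xs"

definition lin_gap :: "nat \<Rightarrow> 's \<Rightarrow> real" where
  "lin_gap k s = g (iterate k s) - g xs - gradg xs \<bullet> (iterate k s - xs)"

definition sigma_star_sq :: real where
  "sigma_star_sq = enn2real (sigma2 nrm P dG gradg xs)"

text \<open>\<open>gradg\<close> is only known on \<open>X\<close>; its measurable extension \<open>mean_grad\<close> is used to
  establish measurability.\<close>

definition mean_grad :: "'e \<Rightarrow> 'e" where
  "mean_grad x = (\<integral>\<omega>. dG x \<omega> \<partial>P)"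

lemma borel_measurable_mean_grad: "mean_grad \<in> borel_measurable borel"
  unfolding mean_grad_def[abs_def]
  by (rule Pp.borel_measurable_lebesgue_integral) (use dG_meas in \<open>simp add: case_prod_beta'\<close>)

lemma mean_grad_eq: "x \<in> X \<Longrightarrow> mean_grad x = gradg x"
  unfolding mean_grad_def using dG_unbiased by auto

lemma noise_eq: "s \<in> space M \<Longrightarrow> noise k s = dG (iterate k s) (om k s) - mean_grad (iterate k s)"
  unfolding noise_def using mean_grad_eq iterate_mem by simp

lemma borel_measurable_centered_sample:
  "(\<lambda>p. dG (fst p) (snd p) - mean_grad (fst p)) \<in> borel_measurable (borel \<Otimes>\<^sub>M P)"
  using dG_meas measurable_compose[OF measurable_fst borel_measurable_mean_grad]
  by (intro borel_measurable_diff) (simp_all add: case_prod_beta')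

lemma borel_measurable_g_comp:
  assumes "f \<in> borel_measurable N" "\<forall>s\<in>space N. f s \<in> X"
  shows "(\<lambda>s. g (f s)) \<in> borel_measurable N"
proof -
  have "continuous_on X g" by (rule has_derivative_continuous_on) (use g_diff in auto)
  then have "g \<in> borel_measurable (restrict_space borel X)"
    by (rule borel_measurable_continuous_on_restrict)
  moreover have "f \<in> measurable N (restrict_space borel X)"
    by (rule measurable_restrict_space2) (use assms in auto)
  ultimately show ?thesis by (simp add: measurable_compose)
qed

lemma borel_measurable_smd:
  "noise k \<in> borel_measurable M" "potential k \<in> borel_measurable M"
  "gap k \<in> borel_measurable M" "lin_gap k \<in> borel_measurable M"
proof -
  have "(\<lambda>s. (iterate k s, om k s)) \<in> measurable M (borel \<Otimes>\<^sub>M P)"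
    using borel_measurable_iterate om_meas by (intro measurable_Pair) auto
  from measurable_compose[OF this borel_measurable_centered_sample]
  show "noise k \<in> borel_measurable M" by (simp cong: measurable_cong add: noise_eq)
  have th: "th \<in> borel_measurable borel" by (rule borel_measurable_continuous_onI[OF prox.dgf_continuous])
  have gth: "gth \<in> borel_measurable borel" by (rule borel_measurable_continuous_onI[OF th_C1])
  show "potential k \<in> borel_measurable M"
    unfolding potential_def[abs_def] bregman_def using borel_measurable_iterate x0_meas
    by (intro borel_measurable_diff borel_measurable_inner measurable_compose[OF _ th]
        measurable_compose[OF _ gth]) auto
  have gi: "(\<lambda>s. g (iterate k s)) \<in> borel_measurable M"
    using borel_measurable_iterate iterate_mem by (intro borel_measurable_g_comp) auto
  then show "gap k \<in> borel_measurable M" unfolding gap_def[abs_def] by simp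
  show "lin_gap k \<in> borel_measurable M"
    unfolding lin_gap_def[abs_def] using gi borel_measurable_iterate by simp
qed

lemma gap_nonneg: "s \<in> space M \<Longrightarrow> gap k s \<ge> 0"
  unfolding gap_def using xs_min iterate_mem by auto

lemma lin_gap_nonneg: "s \<in> space M \<Longrightarrow> lin_gap k s \<ge> 0"
  using convex_on_gradient_inequality[OF X(1) xs_min(1) iterate_mem g_diff g_convex]
  unfolding lin_gap_def by (simp add: algebra_simps)

lemma lin_gap_le_gap: "s \<in> space M \<Longrightarrow> lin_gap k s \<le> gap k s"
  using minimizer_gradient_inner_nonneg[OF X(1) xs_min(1) iterate_mem g_diff xs_min(2)]
  unfolding lin_gap_def gap_def by simp

lemma potential_ge: "potential k s \<ge> 1/2 * (nrm (iterate k s - xs))\<^sup>2"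
  unfolding potential_def
  using prox.bregman_ge_half_sq[where a = "x0 s" and y = "iterate k s" and z = xs]
    is_norm_minus_commute[OF norm] by simp

lemma potential_nonneg: "potential k s \<ge> 0"
  using potential_ge[of k s] zero_le_power2[of "nrm (iterate k s - xs)"] by linarith

lemma potential_step:
  "s \<in> space M \<Longrightarrow> gap (Suc k) s + \<beta> * potential (Suc k) s
     \<le> \<beta> * potential k s - noise k s \<bullet> (iterate k s - xs) + (dual_norm nrm (noise k s))\<^sup>2 / \<beta>"
  unfolding gap_def potential_def noise_def iterate_Suc
  using prox_step_inequality[OF iterate_mem refl] by simp

lemma abs_noise_inner_le:
  "\<bar>noise k s \<bullet> (iterate k s - xs)\<bar> \<le> 1/2 * (dual_norm nrm (noise k s))\<^sup>2 + potential k s"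
proof -
  define y where "y = iterate k s - xs"
  have "\<bar>noise k s \<bullet> y\<bar> \<le> dual_norm nrm (noise k s) * nrm y"
    using inner_le_dual_norm_mult[OF norm, of "noise k s" y]
      inner_le_dual_norm_mult[OF norm, of "noise k s" "- y"] is_norm_minus[OF norm, of y] by simp
  also have "\<dots> \<le> (dual_norm nrm (noise k s))\<^sup>2 / (2 * 1) + 1 * (nrm y)\<^sup>2 / 2"
    by (rule mult_le_weighted_squares) simp
  finally show ?thesis using potential_ge[of k s] unfolding y_def by linarith
qed

end

context smd
begin

lemma integral_noise_sq_le:
  assumes lin: "integrable M (lin_gap k)"
  shows "integrable M (\<lambda>s. (dual_norm nrm (noise k s))\<^sup>2)"
    and "(\<integral>s. (dual_norm nrm (noise k s))\<^sup>2 \<partial>M) \<le> \<kappa> * \<nu> * (\<integral>s. lin_gap k s \<partial>M) + \<kappa>' * sigma_star_sq"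
proof -
  define f where "f p = ennreal ((dual_norm nrm (dG (fst p) (snd p) - mean_grad (fst p)))\<^sup>2)" for p
  have f: "f \<in> borel_measurable (borel \<Otimes>\<^sub>M P)" unfolding f_def[abs_def]
    by (intro measurable_compose[OF _ measurable_ennreal] borel_measurable_power
        borel_measurable_continuous_on[OF dual_norm_continuous[OF norm] borel_measurable_centered_sample])
  have nonneg: "0 \<le> \<kappa> * \<nu> * lin_gap k s + \<kappa>' * sigma_star_sq" if "s \<in> space M" for s
    using params nu_nonneg lin_gap_nonneg[OF that] by (simp add: sigma_star_sq_def)
  have "(\<integral>\<^sup>+ s. ennreal ((dual_norm nrm (noise k s))\<^sup>2) \<partial>M) = (\<integral>\<^sup>+ s. f (iterate k s, om k s) \<partial>M)"
    by (rule nn_integral_cong) (simp add: f_def noise_eq)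
  also have "\<dots> = (\<integral>\<^sup>+ s. (\<integral>\<^sup>+ \<omega>. f (iterate k s, \<omega>) \<partial>P) \<partial>M)"
    using om_meas om_distr
    by (intro Mp.nn_integral_indep_rvs[OF indep_rvs_iterate_sample borel_measurable_iterate _ _ f]) auto
  also have "\<dots> = (\<integral>\<^sup>+ s. sigma2 nrm P dG gradg (iterate k s) \<partial>M)"
    by (rule nn_integral_cong) (simp add: f_def sigma2_def mean_grad_eq iterate_mem)
  also have "\<dots> \<le> (\<integral>\<^sup>+ s. ennreal (\<kappa> * \<nu> * lin_gap k s + \<kappa>' * sigma_star_sq) \<partial>M)"
    using S1 iterate_mem by (intro nn_integral_mono) (simp add: lin_gap_def sigma_star_sq_def)
  also have "\<dots> = ennreal (\<integral>s. \<kappa> * \<nu> * lin_gap k s + \<kappa>' * sigma_star_sq \<partial>M)"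
    by (intro nn_integral_eq_integral AE_I2) (use lin nonneg in auto)
  also have "(\<integral>s. \<kappa> * \<nu> * lin_gap k s + \<kappa>' * sigma_star_sq \<partial>M)
      = \<kappa> * \<nu> * (\<integral>s. lin_gap k s \<partial>M) + \<kappa>' * sigma_star_sq"
    using lin Mp.prob_space by simp
  finally have le: "(\<integral>\<^sup>+ s. ennreal ((dual_norm nrm (noise k s))\<^sup>2) \<partial>M)
      \<le> ennreal (\<kappa> * \<nu> * (\<integral>s. lin_gap k s \<partial>M) + \<kappa>' * sigma_star_sq)" .
  have "0 \<le> \<kappa> * \<nu> * (\<integral>s. lin_gap k s \<partial>M) + \<kappa>' * sigma_star_sq"
    using nonneg lin Mp.prob_space integral_nonneg_AE[of "\<lambda>s. \<kappa> * \<nu> * lin_gap k s + \<kappa>' * sigma_star_sq" M]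
    by simp
  with borel_measurable_smd(1) le
  show "integrable M (\<lambda>s. (dual_norm nrm (noise k s))\<^sup>2)"
    and "(\<integral>s. (dual_norm nrm (noise k s))\<^sup>2 \<partial>M) \<le> \<kappa> * \<nu> * (\<integral>s. lin_gap k s \<partial>M) + \<kappa>' * sigma_star_sq"
    by (auto intro!: integrable_integral_le_of_nn_integral_le borel_measurable_power
        borel_measurable_continuous_on[OF dual_norm_continuous[OF norm]])
qed

lemma integral_noise_inner_eq_0:
  assumes int: "integrable M (\<lambda>s. noise k s \<bullet> (iterate k s - xs))"
  shows "(\<integral>s. noise k s \<bullet> (iterate k s - xs) \<partial>M) = 0"
proof -
  define f where "f p = (dG (fst p) (snd p) - mean_grad (fst p)) \<bullet> (fst p - xs)" for p
  have f: "f \<in> borel_measurable (borel \<Otimes>\<^sub>M P)" unfolding f_def[abs_def]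
    by (intro borel_measurable_inner borel_measurable_centered_sample) measurable
  have eq: "s \<in> space M \<Longrightarrow> noise k s \<bullet> (iterate k s - xs) = f (iterate k s, om k s)" for s
    by (simp add: f_def noise_eq)
  have zero: "(\<integral>\<omega>. f (x, \<omega>) \<partial>P) = 0" if "x \<in> X" for x
  proof -
    have "integrable P (dG x)" using dG_unbiased that by auto
    then show ?thesis
      unfolding f_def using Pp.prob_space by (simp add: inner_diff_left mean_grad_def)
  qed
  have "integrable M (\<lambda>s. f (iterate k s, om k s))"
    using int by (subst Bochner_Integration.integrable_cong[OF refl eq, symmetric]) auto
  then have "(\<integral>s. f (iterate k s, om k s) \<partial>M) = (\<integral>s. (\<integral>\<omega>. f (iterate k s, \<omega>) \<partial>P) \<partial>M)"
    using om_meas om_distr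
    by (intro Mp.integral_indep_rvs[OF indep_rvs_iterate_sample borel_measurable_iterate _ _ f]) auto
  also have "\<dots> = 0" by (rule integral_eq_zero_AE, rule AE_I2) (simp add: zero iterate_mem)
  finally show ?thesis by (simp add: eq cong: Bochner_Integration.integral_cong)
qed

end

context smd
begin

lemma integrable_start_dist_sq:
  "integrable M (\<lambda>s. (nrm (x0 s - xs))\<^sup>2)" "(\<integral>s. (nrm (x0 s - xs))\<^sup>2 \<partial>M) \<le> R\<^sup>2"
  using x0_meas
  by (auto intro!: integrable_integral_le_of_nn_integral_le[OF _ _ x0_R] borel_measurable_power
      borel_measurable_continuous_on[OF is_norm_continuous[OF norm]])

lemma potential_0_le: "potential 0 s \<le> \<Theta> * (nrm (x0 s - xs))\<^sup>2"
  using th_bound[rule_format, of "xs - x0 s"] is_norm_minus_commute[OF norm, of xs "x0 s"]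
  unfolding potential_def bregman_def iterate_0 by (simp add: gth_zero th_min)

lemma lin_gap_0_le: "s \<in> space M \<Longrightarrow> lin_gap 0 s \<le> L / 2 * (nrm (x0 s - xs))\<^sup>2"
  using lipschitz_gradient_upper_bound[OF norm X(1) xs_min(1) _ g_diff g_lip, of "x0 s"] x0_in
  unfolding lin_gap_def iterate_0 by simp

lemma integrable_potential_0: "integrable M (potential 0)"
  using integrable_start_dist_sq(1) potential_0_le potential_nonneg
  by (intro integrable_nonneg_le[OF borel_measurable_smd(2), where h = "\<lambda>s. \<Theta> * (nrm (x0 s - xs))\<^sup>2"])
    auto

lemma integrable_lin_gap_0: "integrable M (lin_gap 0)"
  using integrable_start_dist_sq(1) lin_gap_0_le lin_gap_nonneg
  by (intro integrable_nonneg_le[OF borel_measurable_smd(4), where h = "\<lambda>s. L / 2 * (nrm (x0 s - xs))\<^sup>2"])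
    auto

lemma expected_potential_step:
  assumes V: "integrable M (potential k)" and D: "integrable M (lin_gap k)"
  shows "integrable M (potential (Suc k))" "integrable M (lin_gap (Suc k))" "integrable M (gap (Suc k))"
    "(\<integral>s. gap (Suc k) s \<partial>M) + \<beta> * (\<integral>s. potential (Suc k) s \<partial>M)
       \<le> \<beta> * (\<integral>s. potential k s \<partial>M) + \<kappa> * \<nu> / \<beta> * (\<integral>s. lin_gap k s \<partial>M) + \<kappa>' * sigma_star_sq / \<beta>"
proof -
  define S where "S s = (dual_norm nrm (noise k s))\<^sup>2" for s
  define I where "I s = noise k s \<bullet> (iterate k s - xs)" for s
  define l where "l s = gap (Suc k) s + \<beta> * potential (Suc k) s" for s
  define r where "r s = \<beta> * potential k s - I s + S s / \<beta>" for s
  have Si: "integrable M S" and Sle: "(\<integral>s. S s \<partial>M) \<le> \<kappa> * \<nu> * (\<integral>s. lin_gap k s \<partial>M) + \<kappa>' * sigma_star_sq"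
    unfolding S_def using integral_noise_sq_le[OF D] by auto
  have Ii: "integrable M I"
  proof (rule Bochner_Integration.integrable_bound[OF _ _ AE_I2])
    show "integrable M (\<lambda>s. 1/2 * S s + potential k s)" using Si V by auto
    show "I \<in> borel_measurable M"
      unfolding I_def[abs_def] using borel_measurable_smd(1) borel_measurable_iterate by measurable
    show "norm (I s) \<le> norm (1/2 * S s + potential k s)" for s
      using abs_noise_inner_le[of k s] potential_nonneg[of k s] unfolding I_def S_def by simp
  qed
  have I0: "(\<integral>s. I s \<partial>M) = 0" unfolding I_def by (rule integral_noise_inner_eq_0[OF Ii[unfolded I_def]])
  have ri: "integrable M r" unfolding r_def[abs_def] using V Ii Si by auto
  have lr: "0 \<le> gap (Suc k) s" "0 \<le> potential (Suc k) s" "l s \<le> r s" if "s \<in> space M" for s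
    using gap_nonneg[OF that] potential_nonneg potential_step[OF that]
    unfolding l_def r_def I_def S_def by simp_all
  have li: "integrable M l"
  proof (rule integrable_nonneg_le[OF _ ri])
    show "l \<in> borel_measurable M" unfolding l_def[abs_def] using borel_measurable_smd by measurable
  qed (use lr beta in \<open>simp add: l_def\<close>)
  show Gi: "integrable M (gap (Suc k))"
    by (rule integrable_nonneg_le[OF borel_measurable_smd(3) li]) (use lr beta in \<open>simp add: l_def\<close>)
  show Vi: "integrable M (potential (Suc k))"
  proof (rule integrable_nonneg_le[OF borel_measurable_smd(2), where h = "\<lambda>s. l s / \<beta>"])
    show "integrable M (\<lambda>s. l s / \<beta>)" using li by simp
  qed (use lr beta in \<open>simp add: l_def field_simps\<close>)
  show "integrable M (lin_gap (Suc k))"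
    by (rule integrable_nonneg_le[OF borel_measurable_smd(4) Gi]) (simp add: lin_gap_nonneg lin_gap_le_gap)
  have "(\<integral>s. gap (Suc k) s \<partial>M) + \<beta> * (\<integral>s. potential (Suc k) s \<partial>M) = (\<integral>s. l s \<partial>M)"
    unfolding l_def[abs_def] using Gi Vi by simp
  also have "\<dots> \<le> (\<integral>s. r s \<partial>M)" by (rule integral_mono[OF li ri lr(3)])
  also have "\<dots> = \<beta> * (\<integral>s. potential k s \<partial>M) + (\<integral>s. S s \<partial>M) / \<beta>"
    unfolding r_def[abs_def] using V Ii Si I0 by simp
  also have "\<dots> \<le> \<beta> * (\<integral>s. potential k s \<partial>M) + \<kappa> * \<nu> / \<beta> * (\<integral>s. lin_gap k s \<partial>M) + \<kappa>' * sigma_star_sq / \<beta>"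
    using divide_right_mono[OF Sle, of \<beta>] beta by (simp add: add_divide_distrib)
  finally show "(\<integral>s. gap (Suc k) s \<partial>M) + \<beta> * (\<integral>s. potential (Suc k) s \<partial>M)
       \<le> \<beta> * (\<integral>s. potential k s \<partial>M) + \<kappa> * \<nu> / \<beta> * (\<integral>s. lin_gap k s \<partial>M) + \<kappa>' * sigma_star_sq / \<beta>" .
qed

lemma integrable_potential_lin_gap: "integrable M (potential k) \<and> integrable M (lin_gap k)"
  by (induction k) (use integrable_potential_0 integrable_lin_gap_0 expected_potential_step in auto)

lemma integrable_gap: "k \<ge> 1 \<Longrightarrow> integrable M (gap k)"
  using expected_potential_step(3) integrable_potential_lin_gap by (cases k) auto

lemma sum_expected_gap_le:
  assumes n: "n \<ge> 1"
  shows "(\<Sum>i=1..n. \<integral>s. gap i s \<partial>M)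
    \<le> 2 * (\<beta> * (\<Theta> * R\<^sup>2) + \<kappa> * \<nu>\<^sup>2 / (2 * \<beta>) * R\<^sup>2 + real n * (\<kappa>' * sigma_star_sq / \<beta>))"
proof -
  let ?d0 = "\<integral>s. lin_gap 0 s \<partial>M" and ?n0 = "\<integral>s. (nrm (x0 s - xs))\<^sup>2 \<partial>M"
  have q: "0 \<le> \<kappa> * \<nu> / \<beta>" "\<kappa> * \<nu> / \<beta> \<le> 1/2"
    using params nu_nonneg beta by (auto simp: field_simps)
  have n0: "0 \<le> ?n0" by (rule integral_nonneg_AE) auto
  have "(\<Sum>i=1..n. \<integral>s. gap i s \<partial>M)
      \<le> 2 * (\<beta> * (\<integral>s. potential 0 s \<partial>M) + \<kappa> * \<nu> / \<beta> * ?d0 + real n * (\<kappa>' * sigma_star_sq / \<beta>))"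
  proof (rule sum_le_of_recursive_inequality[OF _ _ _ _ q])
    show "(\<integral>s. gap (Suc k) s \<partial>M) + \<beta> * (\<integral>s. potential (Suc k) s \<partial>M)
        \<le> \<beta> * (\<integral>s. potential k s \<partial>M) + \<kappa> * \<nu> / \<beta> * (\<integral>s. lin_gap k s \<partial>M) + \<kappa>' * sigma_star_sq / \<beta>" for k
      using expected_potential_step(4) integrable_potential_lin_gap by blast
    show "(\<integral>s. lin_gap k s \<partial>M) \<le> (\<integral>s. gap k s \<partial>M)" if "k \<ge> 1" for k
      using integrable_potential_lin_gap integrable_gap[OF that] lin_gap_le_gap by (intro integral_mono) auto
  qed (use n beta gap_nonneg potential_nonneg in \<open>auto intro!: integral_nonneg_AE\<close>)
  moreover have "\<beta> * (\<integral>s. potential 0 s \<partial>M) \<le> \<beta> * (\<Theta> * R\<^sup>2)"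
  proof -
    have "(\<integral>s. potential 0 s \<partial>M) \<le> \<Theta> * ?n0"
      using integrable_potential_0 integrable_start_dist_sq(1) potential_0_le
      by (subst integral_mult_right_zero[symmetric]) (rule integral_mono, auto)
    also have "\<dots> \<le> \<Theta> * R\<^sup>2" by (rule mult_left_mono[OF integrable_start_dist_sq(2) Theta_nonneg])
    finally show ?thesis using beta by simp
  qed
  moreover have "\<kappa> * \<nu> / \<beta> * ?d0 \<le> \<kappa> * \<nu>\<^sup>2 / (2 * \<beta>) * R\<^sup>2"
  proof -
    have "?d0 \<le> L / 2 * ?n0"
      using integrable_lin_gap_0 integrable_start_dist_sq(1) lin_gap_0_le
      by (subst integral_mult_right_zero[symmetric]) (rule integral_mono, auto)
    also have "\<dots> \<le> \<nu> / 2 * R\<^sup>2"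
      using params(3) L_nonneg n0 integrable_start_dist_sq(2) by (intro mult_mono) auto
    finally have "\<kappa> * \<nu> / \<beta> * ?d0 \<le> \<kappa> * \<nu> / \<beta> * (\<nu> / 2 * R\<^sup>2)" by (rule mult_left_mono[OF _ q(1)])
    then show ?thesis by (simp add: power2_eq_square)
  qed
  ultimately show ?thesis unfolding distrib_left by linarith
qed

lemma expected_average_gap_le:
  assumes m: "m \<ge> 1"
  defines "avg s \<equiv> (1 / real m) *\<^sub>R (\<Sum>i=1..m. iterate i s)"
  shows "integrable M (\<lambda>s. g (avg s))"
    and "(\<integral>s. g (avg s) \<partial>M) - g xs
      \<le> 2 * R\<^sup>2 / real m * (\<Theta> * \<beta> + \<kappa> * \<nu>\<^sup>2 / (2 * \<beta>)) + 2 * \<kappa>' * sigma_star_sq / \<beta>"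
proof -
  have m0: "real m > 0" using m by simp
  have avg: "avg s = (\<Sum>i=1..m. (1 / real m) *\<^sub>R iterate i s)" for s
    unfolding avg_def by (simp add: scaleR_sum_right)
  have avg_mem: "avg s \<in> X" if "s \<in> space M" for s
    unfolding avg using that m0 iterate_mem by (intro convex_sum[OF _ X(1)]) auto
  have jensen: "g (avg s) - g xs \<le> 1 / real m * (\<Sum>i=1..m. gap i s)" if "s \<in> space M" for s
  proof -
    have "g (avg s) \<le> (\<Sum>i=1..m. 1 / real m * g (iterate i s))"
      unfolding avg using that m0 iterate_mem by (intro convex_on_sum[OF _ _ g_convex]) auto
    also have "\<dots> = 1 / real m * (\<Sum>i=1..m. gap i s) + g xs"
      using m0 by (simp add: gap_def sum_subtractf sum_divide_distrib[symmetric] algebra_simps)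
    finally show ?thesis by simp
  qed
  have U: "integrable M (\<lambda>s. 1 / real m * (\<Sum>i=1..m. gap i s))"
    using integrable_gap by (intro integrable_mult_right integrable_sum) auto
  have "avg \<in> borel_measurable M" unfolding avg_def[abs_def] using borel_measurable_iterate by auto
  then have gavg: "(\<lambda>s. g (avg s)) \<in> borel_measurable M" using avg_mem by (intro borel_measurable_g_comp) auto
  have H: "integrable M (\<lambda>s. g (avg s) - g xs)"
    using jensen avg_mem xs_min by (intro integrable_nonneg_le[OF _ U]) (use gavg in auto)
  then show gi: "integrable M (\<lambda>s. g (avg s))"
    using Bochner_Integration.integrable_add[OF H, of "\<lambda>_. g xs"] by simp
  have "(\<integral>s. g (avg s) \<partial>M) - g xs = (\<integral>s. g (avg s) - g xs \<partial>M)" using gi by (simp add: Mp.prob_space)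
  also have "\<dots> \<le> (\<integral>s. 1 / real m * (\<Sum>i=1..m. gap i s) \<partial>M)" by (rule integral_mono[OF H U jensen])
  also have "\<dots> = 1 / real m * (\<Sum>i=1..m. \<integral>s. gap i s \<partial>M)" using integrable_gap by (simp add: integral_sum)
  also have "\<dots> \<le> 1 / real m
      * (2 * (\<beta> * (\<Theta> * R\<^sup>2) + \<kappa> * \<nu>\<^sup>2 / (2 * \<beta>) * R\<^sup>2 + real m * (\<kappa>' * sigma_star_sq / \<beta>)))"
    using sum_expected_gap_le[OF m] m0 by (intro mult_left_mono) auto
  also have "\<dots> = 2 * R\<^sup>2 / real m * (\<Theta> * \<beta> + \<kappa> * \<nu>\<^sup>2 / (2 * \<beta>)) + 2 * \<kappa>' * sigma_star_sq / \<beta>"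
    using m0 beta by (simp add: field_simps)
  finally show "(\<integral>s. g (avg s) \<partial>M) - g xs
      \<le> 2 * R\<^sup>2 / real m * (\<Theta> * \<beta> + \<kappa> * \<nu>\<^sup>2 / (2 * \<beta>)) + 2 * \<kappa>' * sigma_star_sq / \<beta>" .
qed

end

theorem proposition1:
  fixes nrm :: "'e::euclidean_space \<Rightarrow> real"
    and X :: "'e set"
    and P :: "'w measure"
    and G :: "'e \<Rightarrow> 'w \<Rightarrow> real" and dG :: "'e \<Rightarrow> 'w \<Rightarrow> 'e"
    and g :: "'e \<Rightarrow> real" and gradg :: "'e \<Rightarrow> 'e"
    and L \<nu> \<kappa> \<kappa>' :: real
    and xs :: 'e
    and th :: "'e \<Rightarrow> real" and gth :: "'e \<Rightarrow> 'e" and \<Theta> :: real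
    and M :: "'s measure" and om :: "nat \<Rightarrow> 's \<Rightarrow> 'w" and x0 :: "'s \<Rightarrow> 'e"
    and R \<beta> :: real and m :: nat
  assumes norm: "is_norm nrm"
    and X: "convex X" "closed X" "interior X \<noteq> {}"
    and P: "prob_space P"
    and g_def: "\<forall>x\<in>X. integrable P (G x) \<and> g x = (\<integral>\<omega>. G x \<omega> \<partial>P)"
    and g_convex: "convex_on X g"
    and g_diff: "\<forall>x\<in>X. (g has_derivative (\<lambda>h. gradg x \<bullet> h)) (at x within X)"
    and g_lip: "\<forall>x\<in>X. \<forall>x'\<in>X. dual_norm nrm (gradg x - gradg x') \<le> L * nrm (x - x')"
    and xs_min: "xs \<in> X" "\<forall>x\<in>X. g xs \<le> g x"
    and xs_unique: "\<forall>y\<in>X. (\<forall>x\<in>X. g y \<le> g x) \<longrightarrow> y = xs"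
    and G_diff: "AE \<omega> in P. \<forall>x\<in>X. ((\<lambda>y. G y \<omega>) has_derivative (\<lambda>h. dG x \<omega> \<bullet> h)) (at x within X)"
    and dG_meas: "(\<lambda>(x, \<omega>). dG x \<omega>) \<in> borel_measurable (borel \<Otimes>\<^sub>M P)"
    and dG_unbiased: "\<forall>x\<in>X. integrable P (dG x) \<and> (\<integral>\<omega>. dG x \<omega> \<partial>P) = gradg x"
    and params: "1 \<le> \<kappa>" "1 \<le> \<kappa>'" "L \<le> \<nu>"
    and sigma_star_fin: "sigma2 nrm P dG gradg xs < \<infinity>"
    and S1: "\<forall>x\<in>X. sigma2 nrm P dG gradg x
               \<le> ennreal (\<kappa> * \<nu> * (g x - g xs - gradg xs \<bullet> (x - xs))
                         + \<kappa>' * enn2real (sigma2 nrm P dG gradg xs))"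
    and th_deriv: "\<forall>x. (th has_derivative (\<lambda>h. gth x \<bullet> h)) (at x)"
    and th_C1: "continuous_on UNIV gth"
    and th_convex: "convex_on UNIV th"
    and th_strong: "\<forall>x x'. (gth x - gth x') \<bullet> (x - x') \<ge> (nrm (x - x'))\<^sup>2"
    and th_min: "th 0 = 0" "\<forall>x. th x \<ge> 0"
    and th_bound: "\<forall>x. th x \<le> \<Theta> * (nrm x)\<^sup>2"
    and M: "prob_space M"
    and om_meas: "\<forall>i. om i \<in> measurable M P"
    and om_distr: "\<forall>i. distr M P (om i) = P"
    and om_indep: "prob_space.indep_vars M (\<lambda>_. P) om UNIV"
    and x0_meas: "x0 \<in> borel_measurable M"
    and x0_indep: "indep_rvs M borel x0 (Pi\<^sub>M UNIV (\<lambda>_::nat. P)) (\<lambda>s i. om i s)"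
    and x0_in: "\<forall>s\<in>space M. x0 s \<in> X"
    and x0_R: "(\<integral>\<^sup>+ s. ennreal ((nrm (x0 s - xs))\<^sup>2) \<partial>M) \<le> ennreal (R\<^sup>2)"
    and beta: "\<beta> > 0" "\<beta> \<ge> 2 * \<kappa> * \<nu>"
    and m: "m \<ge> 1"
  shows "integrable M (\<lambda>s. g ((1 / real m) *\<^sub>R (\<Sum>i=1..m. smd_iter th gth X \<beta> dG (\<lambda>j. om j s) (x0 s) i)))
       \<and> (\<integral>s. g ((1 / real m) *\<^sub>R (\<Sum>i=1..m. smd_iter th gth X \<beta> dG (\<lambda>j. om j s) (x0 s) i)) \<partial>M) - g xs
         \<le> 2 * R\<^sup>2 / real m * (\<Theta> * \<beta> + \<kappa> * \<nu>\<^sup>2 / (2 * \<beta>))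
           + 2 * \<kappa>' * enn2real (sigma2 nrm P dG gradg xs) / \<beta>"
proof -
  interpret smd nrm X P dG g gradg L \<nu> \<kappa> \<kappa>' xs th gth \<Theta> M om x0 R \<beta>
    by (rule smd.intro) (fact assms)+
  have "smd_iter th gth X \<beta> dG (\<lambda>j. om j s) (x0 s) = (\<lambda>i. iterate i s)" for s
    by (simp add: iterate_def)
  then show ?thesis
    using expected_average_gap_le[OF m] unfolding sigma_star_sq_def by simp
qed

end
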